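(* (Beta-derivative identity.) Let $F\in R$ be $k$-monic of $Y$-degree $N$, with factorization $F=F_0\prod_{j=1}^{\chi(F)}F_j$, $F_j\in R^{\natural}$, and let $G\in R$ be such that $\mathrm{GCD}(F,G-c)=1$ for all $c\in k$ and $G_Y\in F_jR$ for $1\le j\le\chi(F)$. Then $$\mathrm{int}(F,G_X)=\mathrm{int}(F,G)-N+\beta(F,G),$$ where each term is an integer.
   Context: Let $k$ be an algebraically closed field of characteristic zero, $R=k((X))[Y]$, and $R^{\natural}$ the set of monic irreducible polynomials of positive degree in $Y$ over $k((X))$. Subscripts denote partial derivatives. For $F\in R$ let $N=\deg_Y F$ ($-\infty$ if $F=0$) and $F_0$ the coefficient of $Y^N$ ($0$ if $F=0$); $F$ is $k$-monic if $0\ne F_0\in k$. Write $F=F_0\prod_{j=1}^{\chi(F)}F_j$ with $F_j\in R^{\natural}$ (repetitions allowed). Intersection multiplicity: for nonzero $F,G\in R$ with $M=\deg_YG$, choose an integer $\nu>0$ divisible by all $\deg_Y F_j$ and write $F(X^\nu,Y)=F_0(X^\nu)\prod_{i=1}^N(Y-z_i(X))$, $z_i\in k((X))$; then $\mathrm{int}(F,G)=M\,\mathrm{ord}_XF_0+\frac1\nu\sum_{i}\mathrm{ord}_XG(X^\nu,z_i(X))$ ($\mathrm{ord}_X0=\infty$). If exactly one of $F,G$ is $0$, $\mathrm{int}(F,G)$ is $0$ if the other lies in $k((X))$ and $\infty$ otherwise; $\mathrm{int}(0,0)=\infty$. Sums with an infinite term are $\infty$. $\mathrm{GCD}(F,G)=1$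 means $\mathrm{int}(F,G)\ne\infty$. For $\Phi\in R^{\natural}$, $\mathrm{res}(\Phi,G)$ is the unique $\lambda\in k$ with $\mathrm{int}(\Phi,G-\lambda)>0$ if $\mathrm{int}(\Phi,G)\ge0$, and $\infty$ otherwise. For $\lambda\in k$: $\alpha_\lambda(F,G)=\{j:\mathrm{res}(F_j,G)=\lambda\}$, $\beta_\lambda(F,G)=\sum_{j\in\alpha_\lambda(F,G)}\mathrm{int}(F_j,G-\lambda)$, $\alpha(F,G)=\{\lambda\in k:\alpha_\lambda(F,G)\ne\emptyset\}$, $\beta(F,G)=\sum_{0\ne\lambda\in\alpha(F,G)}\beta_\lambda(F,G)$. *)

theory Defs
  imports "HOL-Computational_Algebra.Computational_Algebra" "HOL-Library.Extended_Real"
begin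

text \<open>R = k((X))[Y] is rendered as the type 'k fls poly. Elements of k are embedded via fls_const.\<close>

type_synonym 'k R = "'k fls poly"

definition Rnat :: "('k::field) R set" where
  "Rnat = {P. lead_coeff P = 1 \<and> degree P > 0 \<and> irreducible P}"

definition kmonic :: "('k::field) R \<Rightarrow> bool" where
  "kmonic F \<longleftrightarrow> F \<noteq> 0 \<and> lead_coeff F \<in> range fls_const"

definition ordX :: "('k::field) fls \<Rightarrow> ereal" where
  "ordX a = (if a = 0 then \<infinity> else ereal (of_int (fls_subdegree a)))"

definition kconst :: "'k::field \<Rightarrow> 'k R" where
  "kconst c = [:fls_const c:]"

definition nuF :: "('k::field) R \<Rightarrow> nat" where
  "nuF F = (SOME \<nu>. \<nu> > 0 \<and> (\<forall>P\<in>Rnat. P dvd F \<longrightarrow> degree P dvd \<nu>))"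

definition subsX :: "nat \<Rightarrow> ('k::field) R \<Rightarrow> 'k R" where
  "subsX \<nu> F = map_poly (\<lambda>a. fls_compose_power a \<nu>) F"

definition intm :: "('k::field) R \<Rightarrow> 'k R \<Rightarrow> ereal" where
  "intm F G =
     (if F \<noteq> 0 \<and> G \<noteq> 0 then
        (let \<nu> = nuF F in
          ereal (real (degree G)) * ordX (lead_coeff F)
          + ereal (1 / real \<nu>) *
            (\<Sum>z\<in>#proots (subsX \<nu> F). ordX (poly (subsX \<nu> G) z)))
      else if F = 0 \<and> G = 0 then \<infinity>
      else if F = 0 then (if degree G = 0 then 0 else \<infinity>)
      else (if degree F = 0 then 0 else \<infinity>))"

text \<open>res(Phi,G), with None standing for infinity.\<close>
definition res :: "('k::field) R \<Rightarrow> 'k R \<Rightarrow> 'k option" where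
  "res \<Phi> G = (if intm \<Phi> G \<ge> 0 then Some (THE c. intm \<Phi> (G - kconst c) > 0) else None)"

text \<open>Given the multiset Fs of monic irreducible factors F_j of F:\<close>
definition alphaL :: "('k::field) R multiset \<Rightarrow> 'k R \<Rightarrow> 'k \<Rightarrow> 'k R multiset" where
  "alphaL Fs G c = filter_mset (\<lambda>P. res P G = Some c) Fs"

definition betaL :: "('k::field) R multiset \<Rightarrow> 'k R \<Rightarrow> 'k \<Rightarrow> ereal" where
  "betaL Fs G c = (\<Sum>P\<in>#alphaL Fs G c. intm P (G - kconst c))"

definition alphaSet :: "('k::field) R multiset \<Rightarrow> 'k R \<Rightarrow> 'k set" where
  "alphaSet Fs G = {c. alphaL Fs G c \<noteq> {#}}"

definition betaF :: "('k::field) R multiset \<Rightarrow> 'k R \<Rightarrow> ereal" where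
  "betaF Fs G = (\<Sum>c\<in>alphaSet Fs G - {0}. betaL Fs G c)"

text \<open>Partial derivatives: G_Y is pderiv, G_X differentiates coefficients.\<close>
definition derX :: "('k::field) R \<Rightarrow> 'k R" where
  "derX G = map_poly fls_deriv G"

end

theory Submission imports Defs begin

(* Over X = t^d with d = deg P, every P in R-natural splits as the product of Y - w(u t) over
   the d-th roots of unity u, for a single Laurent series w in t (Newton--Puiseux: a Tschirnhausen
   shift, a rescaling read off the Newton polygon and Hensel lifting produce a root over some
   X = t^n; the substitutions t -> u t permute the roots transitively, which brings n down to d).
   Hence int(P, H) = ord_t H(t^d, w(t)), and int(F, -) is additive over the factors F_j.
   Along a branch G_Y(t^d, w) = 0 since F_j divides G_Y, so the chain rule gives
   d/dt G(t^d, w) = d t^(d-1) G_X(t^d, w). Thus ord G_X(t^d, w) = ord (G(t^d, w) - c) - d, where c is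
   the constant term of G(t^d, w) if that series has order 0 (c = res(F_j, G), and the term then
   contributes to beta) and c = 0 otherwise. Summing over j gives the identity. *)

unbundle fps_syntax

locale idom_hom =
  fixes \<phi> :: "'a::idom \<Rightarrow> 'b::idom"
  assumes hom_0 [simp]: "\<phi> 0 = 0"
    and hom_1 [simp]: "\<phi> 1 = 1"
    and hom_add [simp]: "\<phi> (a + b) = \<phi> a + \<phi> b"
    and hom_mult [simp]: "\<phi> (a * b) = \<phi> a * \<phi> b"
begin

lemma hom_uminus [simp]: "\<phi> (- a) = - \<phi> a"
  by (metis add.right_inverse add_eq_0_iff hom_0 hom_add)

lemma hom_diff [simp]: "\<phi> (a - b) = \<phi> a - \<phi> b"
  by (metis diff_conv_add_uminus hom_add hom_uminus)

lemma hom_of_nat [simp]: "\<phi> (of_nat n) = of_nat n"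
  by (induction n) simp_all

lemma map_poly_pCons_hom [simp]: "map_poly \<phi> (pCons a p) = pCons (\<phi> a) (map_poly \<phi> p)"
  by (rule map_poly_pCons) simp

lemma map_poly_add_hom [simp]: "map_poly \<phi> (p + q) = map_poly \<phi> p + map_poly \<phi> q"
  by (intro poly_eqI) (simp add: coeff_map_poly)

lemma map_poly_diff_hom [simp]: "map_poly \<phi> (p - q) = map_poly \<phi> p - map_poly \<phi> q"
  by (intro poly_eqI) (simp add: coeff_map_poly)

lemma map_poly_smult_hom [simp]: "map_poly \<phi> (smult c p) = smult (\<phi> c) (map_poly \<phi> p)"
  by (intro poly_eqI) (simp add: coeff_map_poly)

lemma map_poly_mult_hom [simp]: "map_poly \<phi> (p * q) = map_poly \<phi> p * map_poly \<phi> q"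
  by (induction p) simp_all

lemma map_poly_prod_mset_hom: "map_poly \<phi> (prod_mset A) = prod_mset (image_mset (map_poly \<phi>) A)"
  by (induction A) simp_all

lemma map_poly_prod_hom: "map_poly \<phi> (\<Prod>x\<in>A. f x) = (\<Prod>x\<in>A. map_poly \<phi> (f x))"
  by (induction A rule: infinite_finite_induct) simp_all

lemma map_poly_pcompose_hom: "map_poly \<phi> (pcompose p q) = pcompose (map_poly \<phi> p) (map_poly \<phi> q)"
  by (induction p) (simp_all add: pcompose_pCons)

lemma map_poly_pderiv_hom: "map_poly \<phi> (pderiv p) = pderiv (map_poly \<phi> p)"
  by (intro poly_eqI) (simp add: coeff_map_poly coeff_pderiv)

lemma poly_map_poly_hom: "poly (map_poly \<phi> p) (\<phi> z) = \<phi> (poly p z)"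
  by (induction p) simp_all

end

section \<open>The substitution \<open>X \<mapsto> X\<^sup>d\<close>\<close>

lemma fls_compose_power_nth_mult:
  "d > 0 \<Longrightarrow> fls_compose_power f d $$ (int d * n) = f $$ n"
  by (simp add: fls_nth_compose_power)

lemma fls_compose_power_eq_iff [simp]:
  "d > 0 \<Longrightarrow> fls_compose_power f d = fls_compose_power g d \<longleftrightarrow> f = g"
  by (metis fls_eqI fls_compose_power_nth_mult)

lemma fls_compose_power_eq_0_iff [simp]:
  "d > 0 \<Longrightarrow> fls_compose_power f d = 0 \<longleftrightarrow> f = 0"
  using fls_compose_power_eq_iff[of d f 0] by simp

lemma fls_compose_power_1 [simp]: "fls_compose_power f (Suc 0) = f"
  by (intro fls_eqI) (simp add: fls_nth_compose_power)

lemma fls_compose_power_compose_power: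
  assumes "a > 0" "b > 0"
  shows "fls_compose_power (fls_compose_power f a) b = fls_compose_power f (a * b)"
proof (intro fls_eqI)
  fix n :: int
  show "fls_compose_power (fls_compose_power f a) b $$ n = fls_compose_power f (a * b) $$ n"
  proof (cases "int b dvd n")
    case True
    then obtain m where "n = int b * m" by blast
    then show ?thesis
      using assms by (simp add: fls_nth_compose_power mult.commute[of "int a"])
  qed (use assms in \<open>auto simp: fls_nth_compose_power dest: dvd_mult_right\<close>)
qed

lemma fls_subdegree_compose_power [simp]:
  assumes "d > 0"
  shows "fls_subdegree (fls_compose_power f d) = int d * fls_subdegree f"
proof (cases "f = 0")
  case False
  show ?thesis
  proof (rule fls_subdegree_eqI)
    show "fls_compose_power f d $$ (int d * fls_subdegree f) \<noteq> 0"
      using assms False by (simp add: fls_compose_power_nth_mult)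
    fix k assume k: "k < int d * fls_subdegree f"
    show "fls_compose_power f d $$ k = 0"
    proof (cases "int d dvd k")
      case True
      then obtain j where "k = int d * j" by blast
      with k assms show ?thesis by (simp add: fls_compose_power_nth_mult)
    qed (use assms in \<open>simp add: fls_nth_compose_power\<close>)
  qed
qed simp

lemma ordX_compose_power:
  "d > 0 \<Longrightarrow> ordX (fls_compose_power f d) = ereal (real d) * ordX f"
  by (simp add: ordX_def)

lemma idom_hom_compose_power:
  "d > 0 \<Longrightarrow> idom_hom (\<lambda>a :: 'k::idom fls. fls_compose_power a d)"
  by unfold_locales simp_all

lemma coeff_subsX: "coeff (subsX d p) i = fls_compose_power (coeff p i) d"
  by (simp add: subsX_def coeff_map_poly)

lemma subsX_0 [simp]: "subsX d 0 = 0"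
  by (simp add: subsX_def)

lemma subsX_eq_0_iff [simp]: "d > 0 \<Longrightarrow> subsX d p = 0 \<longleftrightarrow> p = 0"
  by (simp add: poly_eq_iff coeff_subsX)

lemma degree_subsX [simp]: "d > 0 \<Longrightarrow> degree (subsX d p) = degree p"
  by (simp add: degree_def coeff_subsX)

lemma subsX_1 [simp]: "subsX (Suc 0) p = p"
  by (rule poly_eqI) (simp add: coeff_subsX)

lemma subsX_subsX: "a > 0 \<Longrightarrow> b > 0 \<Longrightarrow> subsX b (subsX a p) = subsX (a * b) p"
  by (simp add: subsX_def map_poly_map_poly o_def fls_compose_power_compose_power)

context
  fixes d :: nat
  assumes d: "d > 0"
begin

interpretation compose_power: idom_hom "\<lambda>a :: 'k::field fls. fls_compose_power a d"
  using d by (rule idom_hom_compose_power)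

lemma subsX_pCons [simp]: "subsX d (pCons a p) = pCons (fls_compose_power a d) (subsX d p)"
  unfolding subsX_def by simp

lemma subsX_add [simp]: "subsX d (p + q) = subsX d p + subsX d q"
  unfolding subsX_def by simp

lemma subsX_mult [simp]: "subsX d (p * q) = subsX d p * subsX d q"
  unfolding subsX_def by simp

lemma subsX_diff [simp]: "subsX d (p - q) = subsX d p - subsX d q"
  unfolding subsX_def by simp

lemma subsX_smult [simp]: "subsX d (smult c p) = smult (fls_compose_power c d) (subsX d p)"
  unfolding subsX_def by simp

lemma subsX_kconst [simp]: "subsX d (kconst c) = kconst c"
  using d by (simp add: kconst_def)

lemma subsX_prod_mset: "subsX d (prod_mset A) = prod_mset (image_mset (subsX d) A)"
  unfolding subsX_def by (rule compose_power.map_poly_prod_mset_hom)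

lemma subsX_prod: "subsX d (\<Prod>x\<in>A. f x) = (\<Prod>x\<in>A. subsX d (f x))"
  unfolding subsX_def by (rule compose_power.map_poly_prod_hom)

lemma subsX_pcompose: "subsX d (pcompose p q) = pcompose (subsX d p) (subsX d q)"
  unfolding subsX_def by (rule compose_power.map_poly_pcompose_hom)

lemma pderiv_subsX: "pderiv (subsX d p) = subsX d (pderiv p)"
  unfolding subsX_def by (rule compose_power.map_poly_pderiv_hom[symmetric])

lemma poly_subsX: "poly (subsX d p) (fls_compose_power z d) = fls_compose_power (poly p z) d"
  unfolding subsX_def by (rule compose_power.poly_map_poly_hom)

lemma subsX_dvd_subsX_iff: "subsX d p dvd subsX d q \<longleftrightarrow> p dvd q"
proof
  assume dvd: "subsX d p dvd subsX d q"
  show "p dvd q"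
  proof (cases "p = 0")
    case True
    then show ?thesis using d dvd by simp
  next
    case False
    have "subsX d q = subsX d p * subsX d (q div p) + subsX d (q mod p)"
      by (metis div_mult_mod_eq mult.commute subsX_add subsX_mult)
    then have dvd_mod: "subsX d p dvd subsX d (q mod p)"
      using dvd by (metis dvd_add_right_iff dvd_triv_left)
    have "q mod p = 0"
    proof (rule ccontr)
      assume "q mod p \<noteq> 0"
      then have "degree p \<le> degree (q mod p)"
        using dvd_imp_degree_le[OF dvd_mod] d by simp
      then show False
        using degree_mod_less'[OF False \<open>q mod p \<noteq> 0\<close>] by simp
    qed
    then show ?thesis by (simp add: mod_eq_0_iff_dvd)
  qed
qed (auto elim!: dvdE)

end

section \<open>Roots of unity and the substitutions \<open>X \<mapsto> u X\<close>\<close>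

definition roots_of_unity :: "nat \<Rightarrow> 'k::field set" where
  "roots_of_unity n = {u. u ^ n = 1}"

lemma one_in_roots_of_unity [simp]: "1 \<in> roots_of_unity n"
  by (simp add: roots_of_unity_def)

lemma roots_of_unity_mult:
  "u \<in> roots_of_unity n \<Longrightarrow> v \<in> roots_of_unity n \<Longrightarrow> u * v \<in> roots_of_unity n"
  by (simp add: roots_of_unity_def power_mult_distrib)

lemma roots_of_unity_inverse: "u \<in> roots_of_unity n \<Longrightarrow> inverse u \<in> roots_of_unity n"
  by (simp add: roots_of_unity_def power_inverse)

lemma roots_of_unity_nonzero: "n > 0 \<Longrightarrow> u \<in> roots_of_unity n \<Longrightarrow> u \<noteq> 0"
  by (auto simp: roots_of_unity_def power_0_left)

lemma roots_of_unity_conv_poly: "roots_of_unity n = {u. poly (monom 1 n - 1) u = 0}"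
  by (simp add: roots_of_unity_def poly_monom)

lemma finite_roots_of_unity:
  assumes "n > 0"
  shows "finite (roots_of_unity n :: 'k::field set)"
proof -
  have "coeff (monom 1 n - 1 :: 'k poly) n \<noteq> 0"
    using assms by (simp add: coeff_monom)
  then have "monom 1 n - 1 \<noteq> (0 :: 'k poly)"
    by (metis coeff_0)
  then show ?thesis
    unfolding roots_of_unity_conv_poly by (rule poly_roots_finite)
qed

lemma size_proots_alg_closed:
  fixes p :: "'k::alg_closed_field poly"
  assumes "p \<noteq> 0"
  shows "size (proots p) = degree p"
proof -
  obtain A where A: "size A = degree p" "p = smult (lead_coeff p) (\<Prod>x\<in>#A. [:-x, 1:])"
    using alg_closed_imp_factorization[OF assms] by blast
  have "proots p = proots (\<Prod>x\<in>#A. [:-x, 1:])"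
    using assms by (subst A(2)) simp
  also have "\<dots> = A"
  proof (induction A)
    case (add x A)
    have "(\<Prod>y\<in>#A. [:-y, 1:]) \<noteq> 0"
      by (auto simp: prod_mset_zero_iff)
    then show ?case
      using add by (simp add: proots_mult del: mult_pCons_left)
  qed simp
  finally show ?thesis using A(1) by simp
qed

lemma card_roots_of_unity:
  assumes n: "n > 0"
  shows "card (roots_of_unity n :: 'k::{alg_closed_field, field_char_0} set) = n"
proof -
  define p :: "'k poly" where "p = monom 1 n - 1"
  have "coeff p n = 1"
    using n by (simp add: p_def coeff_monom)
  then have p0: "p \<noteq> 0"
    by auto
  have deg: "degree p = n"
  proof (rule antisym)
    show "degree p \<le> n"
      unfolding p_def by (rule degree_le) (auto simp: coeff_monom)
    show "n \<le> degree p"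
      using \<open>coeff p n = 1\<close> by (intro le_degree) simp
  qed
  have "rsquarefree p"
    using n by (auto simp: rsquarefree_roots p_def pderiv_diff pderiv_monom poly_monom power_0_left)
  then have simple: "count (proots p) x = 1" if "x \<in># proots p" for x
    using that p0 by (simp add: rsquarefree_root_order)
  have "card (roots_of_unity n :: 'k set) = card (set_mset (proots p))"
    using p0 by (simp add: roots_of_unity_conv_poly p_def)
  also have "\<dots> = size (proots p)"
    using simple by (simp add: size_multiset_overloaded_eq)
  also have "\<dots> = n"
    using size_proots_alg_closed[OF p0] deg by simp
  finally show ?thesis .
qed

lemma dvd_if_roots_of_unity_power_int_eq_1:
  assumes n: "n > 0"
    and one: "\<And>u. u \<in> (roots_of_unity n :: 'k::{alg_closed_field, field_char_0} set) \<Longrightarrow> u powi i = 1"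
  shows "int n dvd i"
proof (rule ccontr)
  assume "\<not> int n dvd i"
  define r where "r = nat (i mod int n)"
  have r: "0 < r" "r < n"
    using \<open>\<not> int n dvd i\<close> n by (auto simp: r_def dvd_eq_mod_eq_0 nat_less_iff order_le_neq_trans)
  have "u ^ r = 1" if u: "u \<in> (roots_of_unity n :: 'k set)" for u
  proof -
    have "u powi i = u powi (int n * (i div int n)) * u powi (i mod int n)"
      using roots_of_unity_nonzero[OF n u] by (simp flip: power_int_add)
    also have "u powi (int n * (i div int n)) = 1"
      using u by (simp add: power_int_mult roots_of_unity_def)
    also have "u powi (i mod int n) = u ^ r"
      using n by (simp add: r_def power_int_def)
    finally show ?thesis using one[OF u] by simp
  qed
  then have "(roots_of_unity n :: 'k set) \<subseteq> roots_of_unity r"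
    by (auto simp: roots_of_unity_def)
  from card_mono[OF finite_roots_of_unity[OF r(1)] this] show False
    using r by (simp add: card_roots_of_unity n)
qed

definition fls_scale :: "'k::field \<Rightarrow> 'k fls \<Rightarrow> 'k fls" where
  "fls_scale u f = Abs_fls (\<lambda>i. u powi i * f $$ i)"

lemma fls_scale_nth [simp]: "fls_scale u f $$ i = u powi i * f $$ i"
  unfolding fls_scale_def by (rule nth_Abs_fls_lower_bound[of "fls_subdegree f"]) simp

lemma fls_scale_0 [simp]: "fls_scale u 0 = 0"
  by (intro fls_eqI) simp

lemma fls_scale_eq_0_iff [simp]: "u \<noteq> 0 \<Longrightarrow> fls_scale u f = 0 \<longleftrightarrow> f = 0"
  by (auto simp: fls_eq_iff)

lemma fls_subdegree_scale [simp]: "u \<noteq> 0 \<Longrightarrow> fls_subdegree (fls_scale u f) = fls_subdegree f"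
  by (cases "f = 0") (auto intro!: fls_subdegree_eqI)

lemma ordX_scale: "u \<noteq> 0 \<Longrightarrow> ordX (fls_scale u f) = ordX f"
  by (simp add: ordX_def)

lemma fls_scale_scale: "u \<noteq> 0 \<Longrightarrow> v \<noteq> 0 \<Longrightarrow> fls_scale u (fls_scale v f) = fls_scale (u * v) f"
  by (intro fls_eqI) (simp add: power_int_mult_distrib)

lemma fls_scale_1 [simp]: "fls_scale 1 f = f"
  by (intro fls_eqI) simp

lemma fls_scale_mult:
  assumes u: "u \<noteq> 0"
  shows "fls_scale u (f * g) = fls_scale u f * fls_scale u g"
proof (intro fls_eqI)
  fix n
  have "(fls_scale u f * fls_scale u g) $$ n =
      (\<Sum>i=fls_subdegree f..n - fls_subdegree g. u powi i * f $$ i * (u powi (n - i) * g $$ (n - i)))"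
    using fls_times_nth(2)[of "fls_scale u f" "fls_scale u g" n] u by simp
  also have "\<dots> = (\<Sum>i=fls_subdegree f..n - fls_subdegree g. u powi n * (f $$ i * g $$ (n - i)))"
    using u by (intro sum.cong refl) (simp add: algebra_simps flip: power_int_add)
  also have "\<dots> = fls_scale u (f * g) $$ n"
    by (simp add: fls_times_nth(2) sum_distrib_left)
  finally show "fls_scale u (f * g) $$ n = (fls_scale u f * fls_scale u g) $$ n" ..
qed

lemma idom_hom_scale:
  assumes "u \<noteq> 0"
  shows "idom_hom (fls_scale u)"
proof
  show "fls_scale u 1 = 1"
    by (intro fls_eqI) simp
  show "fls_scale u (a + b) = fls_scale u a + fls_scale u b" for a b
    by (intro fls_eqI) (simp add: algebra_simps)
qed (simp_all add: fls_scale_mult assms)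

lemma fls_scale_compose_power:
  assumes "n > 0" "u \<in> roots_of_unity n"
  shows "fls_scale u (fls_compose_power a n) = fls_compose_power a n"
proof (intro fls_eqI)
  fix i
  show "fls_scale u (fls_compose_power a n) $$ i = fls_compose_power a n $$ i"
  proof (cases "int n dvd i")
    case True
    then obtain j where "i = int n * j" by blast
    then have "u powi i = 1" using assms by (simp add: power_int_mult roots_of_unity_def)
    then show ?thesis by simp
  qed (use assms in \<open>simp add: fls_nth_compose_power\<close>)
qed

definition fls_decimate :: "nat \<Rightarrow> 'k::zero fls \<Rightarrow> 'k fls" where
  "fls_decimate n f = Abs_fls (\<lambda>j. f $$ (int n * j))"

lemma fls_decimate_nth: "n > 0 \<Longrightarrow> fls_decimate n f $$ j = f $$ (int n * j)"
  unfolding fls_decimate_def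
proof (rule nth_Abs_fls_lower_bound[of "min 0 (fls_subdegree f)"], intro allI impI)
  fix k :: int assume "n > 0" "k < min 0 (fls_subdegree f)"
  then have "int n * k \<le> 1 * k"
    by (intro mult_right_mono_neg) auto
  with \<open>k < min 0 (fls_subdegree f)\<close> have "int n * k < fls_subdegree f"
    by linarith
  then show "f $$ (int n * k) = 0" by simp
qed

lemma fls_decimate_0 [simp]: "n > 0 \<Longrightarrow> fls_decimate n 0 = 0"
  by (intro fls_eqI) (simp add: fls_decimate_nth)

lemma fls_compose_power_decimate:
  assumes n: "n > 0" and fixed: "\<And>u. u \<in> (roots_of_unity n :: 'k::{alg_closed_field, field_char_0} set) \<Longrightarrow> fls_scale u f = f"
  shows "fls_compose_power (fls_decimate n f) n = f"
proof (intro fls_eqI)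
  fix i
  show "fls_compose_power (fls_decimate n f) n $$ i = f $$ i"
  proof (cases "f $$ i = 0")
    case False
    have "int n dvd i"
    proof (rule dvd_if_roots_of_unity_power_int_eq_1[OF n])
      fix u :: 'k assume "u \<in> roots_of_unity n"
      then show "u powi i = 1" using fixed[of u] False by (metis fls_scale_nth mult_cancel_right2)
    qed
    then show ?thesis using n by (auto simp: fls_nth_compose_power fls_decimate_nth)
  qed (use n in \<open>auto simp: fls_nth_compose_power fls_decimate_nth\<close>)
qed

section \<open>Hensel lifting\<close>

definition poly_layer :: "nat \<Rightarrow> 'k::zero fls poly \<Rightarrow> 'k poly" where
  "poly_layer n P = map_poly (\<lambda>a. a $$ int n) P"

lemma coeff_poly_layer [simp]: "coeff (poly_layer n P) j = coeff P j $$ int n"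
  by (simp add: poly_layer_def coeff_map_poly)

lemma poly_layer_0_monic:
  fixes P :: "'k::zero_neq_one fls poly"
  assumes "lead_coeff P = 1"
  shows "degree (poly_layer 0 P) = degree P" "lead_coeff (poly_layer 0 P) = 1"
proof -
  show "degree (poly_layer 0 P) = degree P"
    unfolding poly_layer_def by (rule map_poly_degree_eq) (simp add: assms)
  then show "lead_coeff (poly_layer 0 P) = 1"
    using assms by simp
qed

lemma degree_poly_layer_less:
  fixes P :: "'k::zero_neq_one fls poly"
  assumes "lead_coeff P = 1" "n \<ge> 1" "degree P > 0"
  shows "degree (poly_layer n P) < degree P"
proof -
  have "coeff (poly_layer n P) i = 0" if "i \<ge> degree P" for i
    using that assms by (cases "i = degree P") (simp_all add: coeff_eq_0)
  then have "degree (poly_layer n P) \<le> degree P - 1"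
    by (intro degree_le) auto
  then show ?thesis using assms(3) by simp
qed

definition integral_poly :: "'k::zero fls poly \<Rightarrow> bool" where
  "integral_poly P \<longleftrightarrow> (\<forall>j. 0 \<le> fls_subdegree (coeff P j))"

lemma integral_poly_coeff_eq:
  assumes "integral_poly P"
  shows "coeff P j = fps_to_fls (Abs_fps (\<lambda>n. coeff (poly_layer n P) j))"
proof (rule fls_eqI)
  fix m :: int
  show "coeff P j $$ m = fps_to_fls (Abs_fps (\<lambda>n. coeff (poly_layer n P) j)) $$ m"
  proof (cases "m < 0")
    case True
    then have "m < fls_subdegree (coeff P j)"
      using assms by (simp add: integral_poly_def) (meson less_le_trans)
    then show ?thesis using True by simp
  qed simp
qed

lemma fps_to_fls_sum: "fps_to_fls (\<Sum>x\<in>A. f x) = (\<Sum>x\<in>A. fps_to_fls (f x))"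
  by (induction A rule: infinite_finite_induct) auto

definition poly_of_layers :: "nat \<Rightarrow> (nat \<Rightarrow> 'k::field poly) \<Rightarrow> 'k fls poly" where
  "poly_of_layers D Q = (\<Sum>j\<le>D. monom (fps_to_fls (Abs_fps (\<lambda>n. coeff (Q n) j))) j)"

lemma coeff_poly_of_layers:
  assumes "\<And>n. degree (Q n) \<le> D"
  shows "coeff (poly_of_layers D Q) j = fps_to_fls (Abs_fps (\<lambda>n. coeff (Q n) j))"
proof (cases "j \<le> D")
  case False
  then have "coeff (Q n) j = 0" for n
    using assms[of n] by (simp add: coeff_eq_0)
  then have "Abs_fps (\<lambda>n. coeff (Q n) j) = 0"
    by (simp add: fps_eq_iff)
  then show ?thesis using False by (simp add: poly_of_layers_def coeff_sum coeff_monom)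
qed (simp add: poly_of_layers_def coeff_sum coeff_monom)

lemma coeff_poly_of_layers_mult:
  assumes "\<And>n. degree (Q n) \<le> D1" "\<And>n. degree (S n) \<le> D2"
  shows "coeff (poly_of_layers D1 Q * poly_of_layers D2 S) j =
           fps_to_fls (Abs_fps (\<lambda>n. coeff (\<Sum>i\<le>n. Q i * S (n - i)) j))"
proof -
  have "coeff (poly_of_layers D1 Q * poly_of_layers D2 S) j =
      fps_to_fls (\<Sum>a\<le>j. Abs_fps (\<lambda>n. coeff (Q n) a) * Abs_fps (\<lambda>n. coeff (S n) (j - a)))"
    by (simp add: coeff_mult coeff_poly_of_layers[OF assms(1)] coeff_poly_of_layers[OF assms(2)]
        fls_times_fps_to_fls fps_to_fls_sum)
  also have "(\<Sum>a\<le>j. Abs_fps (\<lambda>n. coeff (Q n) a) * Abs_fps (\<lambda>n. coeff (S n) (j - a))) =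
             Abs_fps (\<lambda>n. coeff (\<Sum>i\<le>n. Q i * S (n - i)) j)"
  proof (rule fps_ext)
    fix n
    have "(\<Sum>a\<le>j. Abs_fps (\<lambda>n. coeff (Q n) a) * Abs_fps (\<lambda>n. coeff (S n) (j - a))) $ n =
          (\<Sum>a\<le>j. \<Sum>i\<le>n. coeff (Q i) a * coeff (S (n - i)) (j - a))"
      by (simp add: fps_sum_nth fps_mult_nth atLeast0AtMost)
    also have "\<dots> = coeff (\<Sum>i\<le>n. Q i * S (n - i)) j"
      by (subst sum.swap) (simp add: coeff_sum coeff_mult)
    finally show "(\<Sum>a\<le>j. Abs_fps (\<lambda>n. coeff (Q n) a) * Abs_fps (\<lambda>n. coeff (S n) (j - a))) $ n =
       Abs_fps (\<lambda>n. coeff (\<Sum>i\<le>n. Q i * S (n - i)) j) $ n" by simp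
  qed
  finally show ?thesis .
qed

text \<open>The \<open>n\<close>-th layers \<open>(G\<^sub>n, H\<^sub>n)\<close> of a lifted factorisation \<open>\<Sum> Ps n X\<^sup>n = G H\<close>, obtained by
  solving \<open>g H\<^sub>n + h G\<^sub>n = Ps n - (\<Sum>0<i<n. G\<^sub>i H\<^sub>n\<^sub>-\<^sub>i)\<close> with \<open>deg G\<^sub>n < deg g\<close>, using \<open>u g + v h = 1\<close>.\<close>

function hensel_seq :: "(nat \<Rightarrow> 'k::field poly) \<Rightarrow> 'k poly \<Rightarrow> 'k poly \<Rightarrow> 'k poly \<Rightarrow> nat \<Rightarrow> 'k poly \<times> 'k poly" where
  "hensel_seq Ps g h v n = (if n = 0 then (g, h) else
     (let R = Ps n - (\<Sum>i\<in>{1..<n}. fst (hensel_seq Ps g h v i) * snd (hensel_seq Ps g h v (n - i)));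
          Gn = (v * R) mod g
      in (Gn, (R - h * Gn) div g)))"
  by pat_completeness auto
termination by (relation "measure (\<lambda>(Ps, g, h, v, n). n)") auto

declare hensel_seq.simps [simp del]

lemma hensel_seq_0 [simp]: "hensel_seq Ps g h v 0 = (g, h)"
  by (simp add: hensel_seq.simps)

lemma bezout_division:
  fixes g h R :: "'k::field poly"
  assumes deg_g: "degree g \<ge> 1" and deg_h: "degree h \<ge> 1" and bezout: "u * g + v * h = 1"
    and deg_R: "degree R < degree g + degree h"
  shows "degree ((v * R) mod g) < degree g"
    and "degree ((R - h * ((v * R) mod g)) div g) < degree h"
    and "g * ((R - h * ((v * R) mod g)) div g) + h * ((v * R) mod g) = R"
proof -
  define Gn where "Gn = (v * R) mod g"
  define Hn where "Hn = (R - h * Gn) div g"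
  have g0: "g \<noteq> 0" using deg_g by auto
  show deg_Gn: "degree ((v * R) mod g) < degree g"
    using degree_mod_less[OF g0, of "v * R"] deg_g by auto
  have "R - h * Gn = R * (1 - v * h) + h * g * ((v * R) div g)"
    unfolding Gn_def by (simp add: algebra_simps flip: minus_div_mult_eq_mod)
  also have "1 - v * h = u * g" using bezout by (simp add: algebra_simps)
  finally have "R - h * Gn = g * (R * u + h * ((v * R) div g))"
    by (simp add: algebra_simps)
  then have eq: "g * Hn = R - h * Gn"
    by (simp add: Hn_def)
  then show "g * ((R - h * ((v * R) mod g)) div g) + h * ((v * R) mod g) = R"
    by (simp add: Gn_def Hn_def)
  show "degree ((R - h * ((v * R) mod g)) div g) < degree h"
  proof (cases "Hn = 0")
    case False
    have "degree (h * Gn) < degree g + degree h"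
      using degree_mult_le[of h Gn] deg_Gn by (simp add: Gn_def)
    then have "degree (g * Hn) < degree g + degree h"
      using deg_R eq degree_diff_less by metis
    then show ?thesis using degree_mult_eq[OF g0 False] by (simp add: Hn_def Gn_def)
  qed (use deg_h in \<open>simp add: Hn_def Gn_def\<close>)
qed

lemma hensel_seq_step:
  fixes g h :: "'k::field poly"
  assumes deg_g: "degree g \<ge> 1" and deg_h: "degree h \<ge> 1" and bezout: "u * g + v * h = 1"
    and deg_Ps: "\<And>n. n \<ge> 1 \<Longrightarrow> degree (Ps n) < degree g + degree h"
  shows "n \<ge> 1 \<Longrightarrow> degree (fst (hensel_seq Ps g h v n)) < degree g \<and>
      degree (snd (hensel_seq Ps g h v n)) < degree h \<and>
      g * snd (hensel_seq Ps g h v n) + h * fst (hensel_seq Ps g h v n) =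
        Ps n - (\<Sum>i\<in>{1..<n}. fst (hensel_seq Ps g h v i) * snd (hensel_seq Ps g h v (n - i)))"
proof (induction n rule: less_induct)
  case (less n)
  define R where "R = Ps n - (\<Sum>i\<in>{1..<n}. fst (hensel_seq Ps g h v i) * snd (hensel_seq Ps g h v (n - i)))"
  have seq: "hensel_seq Ps g h v n = ((v * R) mod g, (R - h * ((v * R) mod g)) div g)"
    using less.prems by (subst hensel_seq.simps) (simp add: R_def Let_def)
  have deg_summand: "degree (fst (hensel_seq Ps g h v i) * snd (hensel_seq Ps g h v (n - i))) < degree g + degree h"
    if "i \<in> {1..<n}" for i
  proof -
    have "degree (fst (hensel_seq Ps g h v i)) < degree g"
      using less.IH[of i] that by auto
    moreover have "degree (snd (hensel_seq Ps g h v (n - i))) < degree h"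
      using less.IH[of "n - i"] that by auto
    ultimately show ?thesis
      using degree_mult_le[of "fst (hensel_seq Ps g h v i)" "snd (hensel_seq Ps g h v (n - i))"] by linarith
  qed
  have "degree R < degree g + degree h"
    unfolding R_def using deg_Ps[OF less.prems] deg_summand deg_g
    by (intro degree_diff_less degree_sum_less) auto
  from bezout_division[OF deg_g deg_h bezout this] show ?case
    by (simp add: seq R_def)
qed

lemma hensel_seq_convolution:
  fixes g h :: "'k::field poly"
  assumes "degree g \<ge> 1" "degree h \<ge> 1" "u * g + v * h = 1"
    and "\<And>n. n \<ge> 1 \<Longrightarrow> degree (Ps n) < degree g + degree h"
    and "Ps 0 = g * h"
  shows "(\<Sum>i\<le>n. fst (hensel_seq Ps g h v i) * snd (hensel_seq Ps g h v (n - i))) = Ps n"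
proof (cases "n = 0")
  case False
  have "{..n} = insert 0 (insert n {1..<n})" using False by auto
  then have "(\<Sum>i\<le>n. fst (hensel_seq Ps g h v i) * snd (hensel_seq Ps g h v (n - i))) =
     g * snd (hensel_seq Ps g h v n) + h * fst (hensel_seq Ps g h v n) +
     (\<Sum>i\<in>{1..<n}. fst (hensel_seq Ps g h v i) * snd (hensel_seq Ps g h v (n - i)))"
    using False by (simp add: mult.commute)
  then show ?thesis
    using hensel_seq_step[OF assms(1-4), where n = n] False by simp
qed (simp add: assms(5))

lemma poly_of_layers_monic:
  assumes "lead_coeff (Q 0) = 1" "\<And>n. n \<ge> 1 \<Longrightarrow> degree (Q n) < degree (Q 0)"
  shows "lead_coeff (poly_of_layers (degree (Q 0)) Q) = 1"
    and "degree (poly_of_layers (degree (Q 0)) Q) = degree (Q 0)"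
proof -
  have deg_Q: "degree (Q n) \<le> degree (Q 0)" for n
    using assms(2)[of n] by (cases "n = 0") auto
  have "Abs_fps (\<lambda>n. coeff (Q n) (degree (Q 0))) = 1"
    using assms by (intro fps_ext) (simp add: coeff_eq_0)
  then have top: "coeff (poly_of_layers (degree (Q 0)) Q) (degree (Q 0)) = 1"
    by (simp add: coeff_poly_of_layers[OF deg_Q])
  have "Abs_fps (\<lambda>n. coeff (Q n) i) = 0" if "degree (Q 0) < i" for i
    using le_less_trans[OF deg_Q that] by (intro fps_ext) (simp add: coeff_eq_0)
  then have "degree (poly_of_layers (degree (Q 0)) Q) \<le> degree (Q 0)"
    by (intro degree_le) (simp add: coeff_poly_of_layers[OF deg_Q])
  moreover have "degree (Q 0) \<le> degree (poly_of_layers (degree (Q 0)) Q)"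
    using top by (simp add: le_degree)
  ultimately show "degree (poly_of_layers (degree (Q 0)) Q) = degree (Q 0)"
    by simp
  with top show "lead_coeff (poly_of_layers (degree (Q 0)) Q) = 1"
    by simp
qed

lemma hensel_lifting:
  fixes P :: "'k::field fls poly" and g h :: "'k poly"
  assumes integral: "integral_poly P" and monic: "lead_coeff P = 1"
    and reduction: "poly_layer 0 P = g * h"
    and monic_g: "lead_coeff g = 1" and deg_g: "degree g \<ge> 1" and deg_h: "degree h \<ge> 1"
    and bezout: "u * g + v * h = 1"
  obtains G H where "P = G * H" "lead_coeff G = 1" "degree G = degree g"
proof -
  define Ps where "Ps n = poly_layer n P" for n
  note poly_layer_0_monic(1)[OF monic]
  moreover have "g \<noteq> 0" "h \<noteq> 0"
    using deg_g deg_h by auto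
  ultimately have deg_P: "degree P = degree g + degree h"
    using reduction by (simp add: degree_mult_eq)
  have deg_Ps: "degree (Ps n) < degree g + degree h" if "n \<ge> 1" for n
    using degree_poly_layer_less[OF monic that] deg_P deg_g by (simp add: Ps_def)
  define Gs where "Gs n = fst (hensel_seq Ps g h v n)" for n
  define Hs where "Hs n = snd (hensel_seq Ps g h v n)" for n
  have step: "degree (Gs n) < degree g" "degree (Hs n) < degree h" if "n \<ge> 1" for n
    using hensel_seq_step[OF deg_g deg_h bezout deg_Ps that] by (simp_all add: Gs_def Hs_def)
  have deg_Gs: "degree (Gs n) \<le> degree g" and deg_Hs: "degree (Hs n) \<le> degree h" for n
    using step[of n] by (cases "n = 0"; simp add: Gs_def Hs_def)+
  define G where "G = poly_of_layers (degree g) Gs"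
  define H where "H = poly_of_layers (degree h) Hs"
  have "P = G * H"
  proof (rule poly_eqI)
    have conv: "(\<Sum>i\<le>n. Gs i * Hs (n - i)) = Ps n" for n
      unfolding Gs_def Hs_def by (rule hensel_seq_convolution[OF deg_g deg_h bezout deg_Ps])
        (simp_all add: Ps_def reduction)
    show "coeff P j = coeff (G * H) j" for j
      unfolding G_def H_def coeff_poly_of_layers_mult[OF deg_Gs deg_Hs] conv Ps_def
      by (rule integral_poly_coeff_eq[OF integral])
  qed
  moreover have "lead_coeff G = 1" "degree G = degree g"
    using poly_of_layers_monic[of Gs] step monic_g by (simp_all add: G_def Gs_def)
  ultimately show ?thesis using that by auto
qed

section \<open>Newton--Puiseux\<close>

lemma coeff_linear_power_pred:
  fixes s :: "'a::comm_ring_1"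
  shows "coeff ([:s, 1:] ^ Suc m) m = of_nat (Suc m) * s"
proof (induction m)
  case (Suc m)
  have "coeff ([:s, 1:] ^ Suc (Suc m)) (Suc m) =
      s * coeff ([:s, 1:] ^ Suc m) (Suc m) + coeff ([:s, 1:] ^ Suc m) m"
    by (simp add: mult_pCons_left)
  also have "\<dots> = s + of_nat (Suc m) * s"
    unfolding coeff_linear_power Suc.IH by simp
  finally show ?case by (simp add: algebra_simps)
qed simp

lemma pcompose_monom: "pcompose (monom c n) q = smult c (q ^ n)"
  by (induction n) (simp_all add: monom_altdef pcompose_smult pcompose_mult pcompose_pCons)

lemma coeff_pcompose_linear_shift:
  fixes p :: "'a::comm_ring_1 poly"
  assumes "degree p = Suc m"
  shows "coeff (pcompose p [:s, 1:]) m = coeff p m + of_nat (Suc m) * s * lead_coeff p"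
proof -
  have "pcompose p [:s, 1:] = (\<Sum>i\<le>degree p. smult (coeff p i) ([:s, 1:] ^ i))"
    by (subst (1) poly_as_sum_of_monoms[symmetric]) (simp only: pcompose_sum pcompose_monom)
  then have "coeff (pcompose p [:s, 1:]) m = (\<Sum>i\<le>Suc m. coeff p i * coeff ([:s, 1:] ^ i) m)"
    by (simp only: coeff_sum coeff_smult assms)
  also have "\<dots> = (\<Sum>i\<in>{m, Suc m}. coeff p i * coeff ([:s, 1:] ^ i) m)"
    by (rule sum.mono_neutral_right) (auto simp: coeff_eq_0 degree_linear_power)
  also have "\<dots> = coeff p m * coeff ([:s, 1:] ^ m) m + coeff p (Suc m) * coeff ([:s, 1:] ^ Suc m) m"
    by (simp del: power_Suc)
  also have "\<dots> = coeff p m + of_nat (Suc m) * s * lead_coeff p"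
    unfolding coeff_linear_power coeff_linear_power_pred using assms by (simp add: algebra_simps)
  finally show ?thesis .
qed

lemma tschirnhausen_shift:
  fixes P :: "'a::field_char_0 poly"
  assumes monic: "lead_coeff P = 1" and deg: "degree P = Suc m"
  defines "s \<equiv> - coeff P m / of_nat (Suc m)"
  shows "lead_coeff (pcompose P [:s, 1:]) = 1" "degree (pcompose P [:s, 1:]) = Suc m"
    and "coeff (pcompose P [:s, 1:]) m = 0"
proof -
  show "degree (pcompose P [:s, 1:]) = Suc m"
    using deg by (simp add: degree_pcompose)
  then show "lead_coeff (pcompose P [:s, 1:]) = 1"
    using monic lead_coeff_comp[of "[:s, 1:]" P] deg by simp
  show "coeff (pcompose P [:s, 1:]) m = 0"
    using monic by (simp add: coeff_pcompose_linear_shift[OF deg] s_def del: of_nat_Suc)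
qed

lemma poly_subsX_pcompose_linear:
  "n > 0 \<Longrightarrow> poly (subsX n (pcompose P [:s, 1:])) z = poly (subsX n P) (z + fls_compose_power s n)"
  by (simp add: subsX_pcompose poly_pcompose add.commute)

text \<open>It is integral iff every point \<open>(i, q \<cdot> ord\<^sub>X P\<^sub>i)\<close>
  lies on or above the line of slope \<open>-\<mu>\<close> through \<open>(d, 0)\<close>; the largest such \<open>\<mu>\<close>
  gives an edge of the Newton polygon, so the reduction mod \<open>X\<close> keeps a lower order term.\<close>

definition newton_rescale :: "nat \<Rightarrow> int \<Rightarrow> 'k::field fls poly \<Rightarrow> 'k fls poly" where
  "newton_rescale q \<mu> P =
     smult (fls_X_intpow (- \<mu> * int (degree P))) (pcompose (subsX q P) [:0, fls_X_intpow \<mu>:])"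

lemma coeff_newton_rescale:
  fixes P :: "'k::field fls poly"
  shows "coeff (newton_rescale q \<mu> P) i =
     fls_X_intpow (\<mu> * int i - \<mu> * int (degree P)) * fls_compose_power (coeff P i) q"
proof -
  have "coeff (newton_rescale q \<mu> P) i =
      fls_X_intpow (- \<mu> * int (degree P)) * fls_X_intpow (int i * \<mu>) * fls_compose_power (coeff P i) q"
    by (simp add: newton_rescale_def coeff_pcompose_linear coeff_subsX fls_X_intpow_power mult.assoc)
  also have "fls_X_intpow (- \<mu> * int (degree P)) * fls_X_intpow (int i * \<mu>) =
      (fls_X_intpow (\<mu> * int i - \<mu> * int (degree P)) :: 'k fls)"
    using fls_X_intpow_times_fls_X_intpow[of "- \<mu> * int (degree P)" "int i * \<mu>", where 'a='k]
    by (simp add: algebra_simps)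
  finally show ?thesis .
qed

lemma newton_rescale_monic:
  fixes q :: nat
  assumes "q > 0" "lead_coeff P = 1"
  shows "degree (newton_rescale q \<mu> P) = degree P" "lead_coeff (newton_rescale q \<mu> P) = 1"
proof -
  have top: "coeff (newton_rescale q \<mu> P) (degree P) = 1"
    using assms by (simp add: coeff_newton_rescale)
  moreover have "degree (newton_rescale q \<mu> P) \<le> degree P"
    by (intro degree_le) (simp add: coeff_newton_rescale coeff_eq_0)
  ultimately show "degree (newton_rescale q \<mu> P) = degree P"
    by (metis antisym le_degree one_neq_zero)
  with top show "lead_coeff (newton_rescale q \<mu> P) = 1" by simp
qed

lemma poly_subsX_newton_rescale:
  fixes q :: nat
  assumes "q > 0" "n > 0" "poly (subsX n (newton_rescale q \<mu> P)) z = 0"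
  shows "poly (subsX (q * n) P) (fls_X_intpow (int n * \<mu>) * z) = 0"
proof -
  have "subsX n (newton_rescale q \<mu> P) =
      smult (fls_X_intpow (int n * (- \<mu> * int (degree P))))
        (pcompose (subsX (q * n) P) [:0, fls_X_intpow (int n * \<mu>):])"
    using assms by (simp add: newton_rescale_def subsX_pcompose subsX_subsX)
  then show ?thesis
    using assms(3) by (simp add: poly_pcompose mult.commute fls_shift_eq0_iff)
qed

lemma fls_subdegree_coeff_newton_rescale:
  fixes P :: "'k::field fls poly" and q :: nat
  assumes "q > 0" "coeff P i \<noteq> 0"
  shows "fls_subdegree (coeff (newton_rescale q \<mu> P) i) =
    int q * fls_subdegree (coeff P i) - \<mu> * int (degree P - i)"
proof -
  have "i \<le> degree P" using assms(2) by (rule le_degree)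
  have "fls_subdegree (coeff (newton_rescale q \<mu> P) i) =
      fls_subdegree (fls_X_intpow (\<mu> * int i - \<mu> * int (degree P)) * fls_compose_power (coeff P i) q)"
    by (simp only: coeff_newton_rescale)
  also have "\<dots> = int q * fls_subdegree (coeff P i) + (\<mu> * int i - \<mu> * int (degree P))"
    using assms by (subst fls_subdegree_mult_fls_X_intpow) simp_all
  finally show ?thesis
    using \<open>i \<le> degree P\<close> by (simp add: of_nat_diff algebra_simps)
qed

lemma integral_poly_newton_rescale:
  fixes P :: "'k::field fls poly" and q :: nat
  assumes q: "q > 0" and monic: "lead_coeff P = 1"
    and above: "\<And>i. i < degree P \<Longrightarrow> coeff P i \<noteq> 0 \<Longrightarrow>
      \<mu> * int (degree P - i) \<le> int q * fls_subdegree (coeff P i)"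
  shows "integral_poly (newton_rescale q \<mu> P)"
  unfolding integral_poly_def
proof
  fix i
  show "0 \<le> fls_subdegree (coeff (newton_rescale q \<mu> P) i)"
  proof (cases "coeff P i = 0")
    case False
    then have "i < degree P \<or> i = degree P" using le_degree[of P i] by linarith
    then show ?thesis
      using above[of i] False q monic by (auto simp: fls_subdegree_coeff_newton_rescale)
  qed (simp add: coeff_newton_rescale)
qed

lemma newton_rescale_integral:
  fixes P :: "'k::field fls poly"
  assumes monic: "lead_coeff P = 1" and deg: "degree P = d"
    and nonzero: "i0 < d" "coeff P i0 \<noteq> 0"
  obtains q \<mu> where "q > 0" "integral_poly (newton_rescale q \<mu> P)"
    "\<exists>i<d. coeff P i \<noteq> 0 \<and> coeff (poly_layer 0 (newton_rescale q \<mu> P)) i \<noteq> 0"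
proof -
  define q :: nat where "q = fact d"
  have q0: "q > 0" by (simp add: q_def)
  define S where "S = {i. i < d \<and> coeff P i \<noteq> 0}"
  define v where "v i = (int q * fls_subdegree (coeff P i)) div int (d - i)" for i
  have v: "int q * fls_subdegree (coeff P i) = v i * int (d - i)" if "i < d" for i
  proof -
    have "int (d - i) dvd int q"
      unfolding q_def int_dvd_int_iff using that by (intro dvd_fact) auto
    then show ?thesis by (simp add: v_def)
  qed
  define \<mu> where "\<mu> = Min (v ` S)"
  have "finite S" "i0 \<in> S" using nonzero by (auto simp: S_def)
  then have \<mu>_le: "\<mu> \<le> v i" if "i \<in> S" for i
    using that by (simp add: \<mu>_def)
  have "\<mu> \<in> v ` S"
    unfolding \<mu>_def using \<open>finite S\<close> \<open>i0 \<in> S\<close> by (intro Min_in) auto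
  then obtain i1 where i1: "i1 \<in> S" "v i1 = \<mu>"
    by auto
  have "integral_poly (newton_rescale q \<mu> P)"
    using q0 monic v \<mu>_le by (intro integral_poly_newton_rescale) (auto simp: deg S_def mult_right_mono)
  moreover have "coeff (poly_layer 0 (newton_rescale q \<mu> P)) i1 \<noteq> 0"
  proof -
    have "coeff (newton_rescale q \<mu> P) i1 \<noteq> 0"
      using i1(1) q0 by (simp add: coeff_newton_rescale S_def fls_shift_eq0_iff)
    moreover have "fls_subdegree (coeff (newton_rescale q \<mu> P) i1) = 0"
      using i1 q0 v[of i1] by (simp add: fls_subdegree_coeff_newton_rescale S_def deg)
    ultimately show ?thesis
      using nth_fls_subdegree_nonzero by fastforce
  qed
  ultimately show ?thesis
    using that q0 i1(1) by (auto simp: S_def)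
qed

lemma monic_single_root_eq_power:
  fixes r :: "'k::alg_closed_field poly"
  assumes monic: "lead_coeff r = 1" and single: "\<And>y. poly r y = 0 \<Longrightarrow> y = x"
  shows "r = [:-x, 1:] ^ degree r"
proof -
  have "r \<noteq> 0" using monic by auto
  obtain A where A: "size A = degree r" "r = smult (lead_coeff r) (\<Prod>y\<in>#A. [:-y, 1:])"
    using alg_closed_imp_factorization[OF \<open>r \<noteq> 0\<close>] by blast
  have "set_mset A \<subseteq> {x}"
  proof
    fix y assume "y \<in># A"
    then have "poly r y = 0"
      by (subst A(2)) (auto simp: poly_prod_mset prod_mset_zero_iff)
    then show "y \<in> {x}" using single by simp
  qed
  then have "A = replicate_mset (degree r) x"
    using A(1) set_mset_subset_singletonD by metis
  then show ?thesis using A(2) monic by simp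
qed

text \<open>An element of minimal degree in the ideal \<open>(g, h)\<close> generates it.\<close>

lemma poly_ideal_generator:
  fixes g h :: "'k::field poly"
  assumes "g \<noteq> 0"
  obtains u v where "u * g + v * h \<noteq> 0" "u * g + v * h dvd g" "u * g + v * h dvd h"
proof -
  define D where "D = (LEAST n. \<exists>u v. u * g + v * h \<noteq> 0 \<and> degree (u * g + v * h) = n)"
  have "\<exists>u v. u * g + v * h \<noteq> 0 \<and> degree (u * g + v * h) = D"
    unfolding D_def by (rule LeastI[of _ "degree g"], rule exI[of _ 1], rule exI[of _ 0]) (simp add: assms)
  then obtain u v where m0: "u * g + v * h \<noteq> 0" and deg_m: "degree (u * g + v * h) = D"
    by blast
  define m where "m = u * g + v * h"
  have minimal: "D \<le> degree (u' * g + v' * h)" if "u' * g + v' * h \<noteq> 0" for u' v'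
    unfolding D_def by (rule Least_le) (use that in blast)
  have "m dvd u' * g + v' * h" for u' v'
  proof -
    define x where "x = u' * g + v' * h"
    have x_mod: "x mod m = (u' - u * (x div m)) * g + (v' - v * (x div m)) * h"
      unfolding m_def x_def by (simp add: algebra_simps flip: minus_div_mult_eq_mod x_def m_def)
    have "x mod m = 0"
    proof (rule ccontr)
      assume "x mod m \<noteq> 0"
      then have "degree (x mod m) < D"
        using degree_mod_less'[of m x] m0 deg_m by (simp add: m_def)
      then show False
        using minimal \<open>x mod m \<noteq> 0\<close> x_mod by (metis leD)
    qed
    then show ?thesis by (simp add: x_def mod_eq_0_iff_dvd)
  qed
  from this[of 1 0] this[of 0 1] show ?thesis
    using that m0 by (simp add: m_def)
qed

lemma bezout_no_common_root:
  fixes g h :: "'k::alg_closed_field poly"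
  assumes "g \<noteq> 0" and no_common_root: "\<And>x. poly g x = 0 \<Longrightarrow> poly h x \<noteq> 0"
  obtains u v where "u * g + v * h = 1"
proof -
  obtain u v where m: "u * g + v * h \<noteq> 0" "u * g + v * h dvd g" "u * g + v * h dvd h"
    using poly_ideal_generator[OF assms(1)] by blast
  have "degree (u * g + v * h) = 0"
  proof (rule ccontr)
    assume "degree (u * g + v * h) \<noteq> 0"
    then obtain x where "poly (u * g + v * h) x = 0"
      using alg_closed_imp_poly_has_root by blast
    with m(2,3) have "poly g x = 0" "poly h x = 0"
      by (meson dvd_trans poly_eq_0_iff_dvd)+
    with no_common_root show False by blast
  qed
  then obtain c where c: "u * g + v * h = [:c:]" "c \<noteq> 0"
    using m(1) by (metis degree_eq_zeroE pCons_0_0)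
  then have "smult (inverse c) u * g + smult (inverse c) v * h = 1"
    by (metis mult_smult_left smult_add_right smult_pCons smult_0_right left_inverse one_pCons)
  then show ?thesis using that by blast
qed

text \<open>A monic \<open>r\<close> with vanishing subleading coefficient has a single root only if it is
  \<open>Y ^ degree r\<close>; otherwise it splits off the full power of one linear factor.\<close>

lemma monic_splits_coprime:
  fixes r :: "'k::{alg_closed_field, field_char_0} poly"
  assumes monic: "lead_coeff r = 1" and deg: "degree r = Suc m" and subleading: "coeff r m = 0"
    and nonzero: "i < m" "coeff r i \<noteq> 0"
  obtains g h u v where "r = g * h" "lead_coeff g = 1" "degree g \<ge> 1" "degree h \<ge> 1"
    "u * g + v * h = 1"
proof -
  obtain x where x: "poly r x = 0"
    using alg_closed_imp_poly_has_root[of r] deg by auto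
  have "\<exists>y. poly r y = 0 \<and> y \<noteq> x"
  proof (rule ccontr)
    assume "\<nexists>y. poly r y = 0 \<and> y \<noteq> x"
    then have r: "r = [:-x, 1:] ^ Suc m"
      using monic_single_root_eq_power[OF monic] deg by metis
    then have "of_nat (Suc m) * (- x) = 0"
      using subleading coeff_linear_power_pred[of "- x" m] by simp
    then have "r = monom 1 (Suc m)"
      using r by (simp add: monom_altdef del: of_nat_Suc)
    then show False
      using nonzero by (simp add: coeff_monom)
  qed
  then obtain y where y: "poly r y = 0" "y \<noteq> x" by blast
  have "r \<noteq> 0" using monic by auto
  define e where "e = order x r"
  obtain h where r: "r = [:-x, 1:] ^ e * h" and "\<not> [:-x, 1:] dvd h"
    using order_decomp[OF \<open>r \<noteq> 0\<close>] unfolding e_def by blast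
  then have hx: "poly h x \<noteq> 0" by (simp add: poly_eq_0_iff_dvd)
  have "e \<ge> 1" using x \<open>r \<noteq> 0\<close> by (simp add: e_def order_root Suc_le_eq)
  have "poly h y = 0" using y r by simp
  moreover have "h \<noteq> 0" using r \<open>r \<noteq> 0\<close> by auto
  ultimately have "degree h \<ge> 1"
    by (metis degree_eq_zeroE less_one not_le pCons_0_0 poly_const_conv)
  obtain u v where "u * [:-x, 1:] ^ e + v * h = 1"
    using bezout_no_common_root[of "[:-x, 1:] ^ e" h] hx by fastforce
  moreover have "lead_coeff ([:-x, 1:] ^ e) = 1" "degree ([:-x, 1:] ^ e) \<ge> 1"
    using \<open>e \<ge> 1\<close> by (simp_all add: degree_linear_power coeff_linear_power)
  ultimately show ?thesis using that r \<open>degree h \<ge> 1\<close> by blast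
qed

lemma newton_hensel_factor:
  fixes P :: "'k::{alg_closed_field, field_char_0} fls poly"
  assumes P: "lead_coeff P = 1" "degree P = Suc m" "coeff P m = 0" and nonzero: "coeff P 0 \<noteq> 0"
  obtains q \<mu> G H where "q > 0" "newton_rescale q \<mu> P = G * H" "lead_coeff G = 1"
    "degree G \<ge> 1" "degree G < Suc m"
proof -
  have "m > 0" using P(3) nonzero by (cases m) auto
  then obtain q \<mu> where q: "q > 0" and integral: "integral_poly (newton_rescale q \<mu> P)"
    and "\<exists>i<Suc m. coeff P i \<noteq> 0 \<and> coeff (poly_layer 0 (newton_rescale q \<mu> P)) i \<noteq> 0"
    using newton_rescale_integral[OF P(1,2), of 0] nonzero by blast
  moreover define R where "R = newton_rescale q \<mu> P"
  ultimately obtain i where i: "i < m" "coeff (poly_layer 0 R) i \<noteq> 0"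
    using P(3) less_antisym by blast
  have R: "lead_coeff R = 1" "degree R = Suc m"
    using newton_rescale_monic[OF q P(1)] P(2) by (simp_all add: R_def)
  have r: "lead_coeff (poly_layer 0 R) = 1" "degree (poly_layer 0 R) = Suc m"
    using poly_layer_0_monic[OF R(1)] R(2) by simp_all
  have "coeff (poly_layer 0 R) m = 0"
    using P(3) by (simp add: R_def coeff_newton_rescale)
  then obtain g h u v where gh: "poly_layer 0 R = g * h" "lead_coeff g = 1"
      "degree g \<ge> 1" "degree h \<ge> 1" "u * g + v * h = 1"
    using monic_splits_coprime[OF r _ i] by blast
  then obtain G H where GH: "R = G * H" "lead_coeff G = 1" "degree G = degree g"
    using hensel_lifting[OF integral[folded R_def] R(1)] by metis
  have "g \<noteq> 0" "h \<noteq> 0"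
    using gh(3,4) by auto
  then have "degree G < Suc m"
    using r(2) gh(1,4) GH(3) by (simp add: degree_mult_eq)
  then show ?thesis
    using that q GH gh(3) by (simp add: R_def)
qed

theorem puiseux_root:
  fixes P :: "'k::{alg_closed_field, field_char_0} fls poly"
  assumes "lead_coeff P = 1" "degree P \<ge> 1"
  shows "\<exists>n>0. \<exists>z. poly (subsX n P) z = 0"
  using assms
proof (induction "degree P" arbitrary: P rule: less_induct)
  case less
  then obtain m where deg: "degree P = Suc m" by (cases "degree P") auto
  define P1 where "P1 = pcompose P [:- coeff P m / of_nat (Suc m), 1:]"
  have P1: "lead_coeff P1 = 1" "degree P1 = Suc m" "coeff P1 m = 0"
    using tschirnhausen_shift[OF less.prems(1) deg] by (simp_all add: P1_def)
  have root_P: "\<exists>z. poly (subsX n P) z = 0" if "n > 0" "poly (subsX n P1) w = 0" for n w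
    using that by (auto simp: P1_def poly_subsX_pcompose_linear)
  show ?case
  proof (cases "coeff P1 0 = 0")
    case True
    then have "poly (subsX 1 P1) 0 = 0"
      by (simp add: poly_0_coeff_0)
    then show ?thesis
      using root_P[of 1] zero_less_one by blast
  next
    case False
    obtain q \<mu> G H where q: "q > 0" and GH: "newton_rescale q \<mu> P1 = G * H" "lead_coeff G = 1"
      "degree G \<ge> 1" "degree G < Suc m"
      using newton_hensel_factor[OF P1 False] by blast
    then obtain n z where n: "n > 0" "poly (subsX n G) z = 0"
      using less.hyps deg by metis
    then have "poly (subsX n (newton_rescale q \<mu> P1)) z = 0"
      by (simp add: GH(1))
    then have "poly (subsX (q * n) P1) (fls_X_intpow (int n * \<mu>) * z) = 0"
      by (rule poly_subsX_newton_rescale[OF q n(1)])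
    then show ?thesis
      using root_P q n(1) by (meson nat_0_less_mult_iff)
  qed
qed

section \<open>Conjugate roots of an irreducible factor\<close>

lemma fls_scale_poly_subsX:
  assumes "n > 0" "u \<in> roots_of_unity n"
  shows "fls_scale u (poly (subsX n p) w) = poly (subsX n p) (fls_scale u w)"
proof -
  interpret idom_hom "fls_scale u"
    using assms by (intro idom_hom_scale roots_of_unity_nonzero)
  have "map_poly (fls_scale u) (subsX n p) = subsX n p"
    using assms by (intro poly_eqI) (simp add: coeff_map_poly coeff_subsX fls_scale_compose_power)
  then show ?thesis
    using poly_map_poly_hom[of "subsX n p" w] by simp
qed

lemma prod_linear_factors_dvd:
  fixes p :: "'a::idom poly"
  assumes "finite A" "\<And>v. v \<in> A \<Longrightarrow> poly p v = 0"
  shows "(\<Prod>v\<in>A. [:-v, 1:]) dvd p"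
  using assms
proof (induction A arbitrary: p rule: finite_induct)
  case (insert x A)
  obtain s where s: "p = [:-x, 1:] * s"
    using insert.prems by (meson dvdE insertI1 poly_eq_0_iff_dvd)
  have "poly s v = 0" if "v \<in> A" for v
    using insert.prems[of v] insert.hyps(2) that s by auto
  then show ?case
    unfolding prod.insert[OF insert.hyps] s by (intro mult_dvd_mono dvd_refl insert.IH)
qed simp

lemma monic_dvd_irreducible_eq:
  fixes p q :: "'a::field poly"
  assumes "irreducible p" "lead_coeff p = 1" "lead_coeff q = 1" "degree q > 0" "q dvd p"
  shows "q = p"
proof -
  obtain c where c: "p = q * c" using assms(5) by (elim dvdE)
  have "\<not> is_unit q" using assms(4) by (auto simp: is_unit_poly_iff)
  then have "is_unit c" using irreducibleD[OF assms(1) c] by blast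
  then obtain a where a: "c = [:a:]" by (auto simp: is_unit_poly_iff)
  then have "a = 1"
    using arg_cong[OF c, of lead_coeff] assms(2,3) by (cases "a = 0") (simp_all add: lead_coeff_mult)
  with a c show ?thesis by simp
qed

definition fls_orbit :: "nat \<Rightarrow> 'k::field fls \<Rightarrow> 'k fls set" where
  "fls_orbit n w = (\<lambda>u. fls_scale u w) ` roots_of_unity n"

lemma finite_fls_orbit: "n > 0 \<Longrightarrow> finite (fls_orbit n w)"
  by (simp add: fls_orbit_def finite_roots_of_unity)

lemma self_in_fls_orbit: "w \<in> fls_orbit n w"
  unfolding fls_orbit_def by (metis fls_scale_1 image_eqI one_in_roots_of_unity)

lemma fls_scale_image_fls_orbit:
  fixes w :: "'k::field fls"
  assumes n: "n > 0" and u: "u \<in> roots_of_unity n"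
  shows "fls_scale u ` fls_orbit n w = fls_orbit n w"
proof -
  have u0: "u \<noteq> 0" using roots_of_unity_nonzero[OF n u] .
  have "fls_scale u ` fls_orbit n w = (\<lambda>u'. fls_scale u' w) ` ((*) u ` roots_of_unity n)"
    unfolding fls_orbit_def image_image
    using u0 by (intro image_cong refl) (simp add: fls_scale_scale roots_of_unity_nonzero[OF n])
  also have "(*) u ` roots_of_unity n = roots_of_unity n"
  proof (intro equalityI subsetI)
    fix x :: 'k assume "x \<in> roots_of_unity n"
    then have "x = u * (inverse u * x)" "inverse u * x \<in> roots_of_unity n"
      using u0 u by (simp_all add: roots_of_unity_mult roots_of_unity_inverse)
    then show "x \<in> (*) u ` roots_of_unity n" by blast
  qed (use u roots_of_unity_mult in blast)
  finally show ?thesis by (simp add: fls_orbit_def)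
qed

lemma poly_subsX_orbit_eq_0:
  assumes "n > 0" "poly (subsX n P) w = 0" "v \<in> fls_orbit n w"
  shows "poly (subsX n P) v = 0"
proof -
  obtain u where "u \<in> roots_of_unity n" "v = fls_scale u w"
    using assms(3) by (auto simp: fls_orbit_def)
  then show ?thesis
    using fls_scale_poly_subsX[OF assms(1), of u P w] assms(2) by simp
qed

lemma map_poly_scale_orbit_prod:
  assumes n: "n > 0" and u: "u \<in> roots_of_unity n"
  shows "map_poly (fls_scale u) (\<Prod>v\<in>fls_orbit n w. [:-v, 1:]) = (\<Prod>v\<in>fls_orbit n w. [:-v, 1:])"
proof -
  have u0: "u \<noteq> 0" using roots_of_unity_nonzero[OF n u] .
  interpret idom_hom "fls_scale u"
    using u0 by (rule idom_hom_scale)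
  have "inj (fls_scale u)"
    using u0 by (intro injI) (metis fls_scale_scale fls_scale_1 inverse_nonzero_iff_nonzero left_inverse)
  then have "(\<Prod>v\<in>fls_orbit n w. [:- fls_scale u v, 1:]) = (\<Prod>v\<in>fls_scale u ` fls_orbit n w. [:-v, 1:])"
    by (simp add: prod.reindex inj_on_def inj_def)
  then show ?thesis
    by (simp add: map_poly_prod_hom fls_scale_image_fls_orbit[OF n u])
qed

lemma scale_invariant_poly_eq_subsX:
  fixes Q :: "'k::{alg_closed_field, field_char_0} fls poly"
  assumes n: "n > 0" and fixed: "\<And>u. u \<in> roots_of_unity n \<Longrightarrow> map_poly (fls_scale u) Q = Q"
  shows "Q = subsX n (map_poly (fls_decimate n) Q)"
proof (rule poly_eqI)
  fix i
  have "fls_compose_power (fls_decimate n (coeff Q i)) n = coeff Q i"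
  proof (rule fls_compose_power_decimate[OF n])
    fix u :: 'k assume "u \<in> roots_of_unity n"
    then show "fls_scale u (coeff Q i) = coeff Q i"
      using fixed arg_cong[where f = "\<lambda>p. coeff p i"] by (metis coeff_map_poly fls_scale_0)
  qed
  then show "coeff Q i = coeff (subsX n (map_poly (fls_decimate n) Q)) i"
    using n by (simp add: coeff_subsX coeff_map_poly)
qed

text \<open>The roots of \<open>P(X\<^sup>n, Y)\<close> for irreducible \<open>P\<close> form a single orbit under \<open>X \<mapsto> u X\<close>, \<open>u\<^sup>n = 1\<close>:
  the product over an orbit is invariant, hence comes from a factor of \<open>P\<close>.\<close>

lemma subsX_eq_orbit_prod:
  fixes P :: "'k::{alg_closed_field, field_char_0} R"
  assumes P: "P \<in> Rnat" and n: "n > 0" and w: "poly (subsX n P) w = 0"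
  shows "subsX n P = (\<Prod>v\<in>fls_orbit n w. [:-v, 1:])"
proof -
  define Q where "Q = (\<Prod>v\<in>fls_orbit n w. [:-v, 1:])"
  define Q0 where "Q0 = map_poly (fls_decimate n) Q"
  have Q: "Q = subsX n Q0"
    unfolding Q0_def Q_def using map_poly_scale_orbit_prod n
    by (intro scale_invariant_poly_eq_subsX) auto
  have "Q dvd subsX n P"
    unfolding Q_def using poly_subsX_orbit_eq_0[OF n w]
    by (intro prod_linear_factors_dvd finite_fls_orbit n)
  then have "Q0 dvd P"
    using Q n by (simp add: subsX_dvd_subsX_iff)
  moreover have "lead_coeff Q0 = 1"
  proof -
    have "lead_coeff Q = 1" by (simp add: Q_def lead_coeff_prod)
    then show ?thesis
      using Q n by (metis coeff_subsX degree_subsX fls_compose_power_1_left fls_compose_power_eq_iff)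
  qed
  moreover have "degree Q0 > 0"
  proof -
    have "degree Q = card (fls_orbit n w)"
      by (simp add: Q_def degree_prod_sum_eq)
    then show ?thesis
      using Q n finite_fls_orbit self_in_fls_orbit by (metis card_gt_0_iff degree_subsX empty_iff)
  qed
  ultimately have "Q0 = P"
    using P by (intro monic_dvd_irreducible_eq) (auto simp: Rnat_def)
  then show ?thesis
    using Q by (simp add: Q_def)
qed

lemma card_fls_orbit:
  fixes P :: "'k::{alg_closed_field, field_char_0} R"
  assumes "P \<in> Rnat" "n > 0" "poly (subsX n P) w = 0"
  shows "card (fls_orbit n w) = degree P"
  using arg_cong[OF subsX_eq_orbit_prod[OF assms], of degree] assms(2)
  by (simp add: degree_prod_sum_eq)

text \<open>Multiplication by \<open>x\<close> permutes \<open>S\<close>, so \<open>x ^ card S\<close> times the product of \<open>S\<close> is that product.\<close>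

lemma finite_mult_subgroup_power_card:
  fixes S :: "'a::field set"
  assumes fin: "finite S" and nz: "0 \<notin> S"
    and mult: "\<And>x y. x \<in> S \<Longrightarrow> y \<in> S \<Longrightarrow> x * y \<in> S"
    and inv: "\<And>x. x \<in> S \<Longrightarrow> inverse x \<in> S"
    and x: "x \<in> S"
  shows "x ^ card S = 1"
proof -
  have "x \<noteq> 0" using x nz by auto
  have "(*) x ` S = S"
  proof (intro equalityI subsetI)
    fix y assume "y \<in> S"
    then have "y = x * (inverse x * y)" "inverse x * y \<in> S"
      using \<open>x \<noteq> 0\<close> mult inv x by simp_all
    then show "y \<in> (*) x ` S" by blast
  qed (use mult x in blast)
  moreover have "inj_on ((*) x) S" using \<open>x \<noteq> 0\<close> by (auto simp: inj_on_def)
  ultimately have "(\<Prod>s\<in>S. x * s) = (\<Prod>s\<in>S. s)"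
    using prod.reindex[of "(*) x" S "\<lambda>s. s"] by simp
  then have "x ^ card S * (\<Prod>s\<in>S. s) = (\<Prod>s\<in>S. s)"
    by (simp add: prod.distrib)
  moreover have "(\<Prod>s\<in>S. s) \<noteq> 0" using fin nz by (simp add: prod_zero_iff)
  ultimately show ?thesis by simp
qed

definition fls_stabilizer :: "nat \<Rightarrow> 'k::field fls \<Rightarrow> 'k set" where
  "fls_stabilizer n w = {u \<in> roots_of_unity n. fls_scale u w = w}"

lemma card_fiber_eq_card_fls_stabilizer:
  fixes w :: "'k::field fls"
  assumes n: "n > 0" and v: "v \<in> fls_orbit n w"
  shows "card {u \<in> roots_of_unity n. fls_scale u w = v} = card (fls_stabilizer n w)"
proof -
  obtain u0 where u0: "u0 \<in> roots_of_unity n" "v = fls_scale u0 w"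
    using v unfolding fls_orbit_def by blast
  have "u0 \<noteq> 0" using roots_of_unity_nonzero[OF n u0(1)] .
  have "{u \<in> roots_of_unity n. fls_scale u w = v} = (*) u0 ` fls_stabilizer n w"
  proof (intro equalityI subsetI)
    fix u assume u: "u \<in> {u \<in> roots_of_unity n. fls_scale u w = v}"
    then have "u \<noteq> 0" using roots_of_unity_nonzero[OF n] by auto
    have "fls_scale (inverse u0 * u) w = fls_scale (inverse u0) (fls_scale u w)"
      using \<open>u \<noteq> 0\<close> \<open>u0 \<noteq> 0\<close> by (simp add: fls_scale_scale)
    also have "\<dots> = w"
      using u u0(2) \<open>u0 \<noteq> 0\<close> by (simp add: fls_scale_scale)
    finally have "inverse u0 * u \<in> fls_stabilizer n w"
      using u u0(1) by (simp add: fls_stabilizer_def roots_of_unity_mult roots_of_unity_inverse)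
    moreover have "u = u0 * (inverse u0 * u)" using \<open>u0 \<noteq> 0\<close> by simp
    ultimately show "u \<in> (*) u0 ` fls_stabilizer n w" by blast
  next
    fix u assume "u \<in> (*) u0 ` fls_stabilizer n w"
    then obtain s where s: "s \<in> fls_stabilizer n w" "u = u0 * s" by auto
    then have "s \<noteq> 0" using roots_of_unity_nonzero[OF n] by (auto simp: fls_stabilizer_def)
    then show "u \<in> {u \<in> roots_of_unity n. fls_scale u w = v}"
      using s u0 \<open>u0 \<noteq> 0\<close> by (auto simp: fls_stabilizer_def roots_of_unity_mult simp flip: fls_scale_scale)
  qed
  then show ?thesis using \<open>u0 \<noteq> 0\<close> by (simp add: card_image inj_on_def)
qed

lemma card_roots_of_unity_orbit_stabilizer:
  fixes w :: "'k::field fls"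
  assumes n: "n > 0"
  shows "card (roots_of_unity n :: 'k set) = card (fls_orbit n w) * card (fls_stabilizer n w)"
proof -
  define fiber where "fiber v = {u \<in> roots_of_unity n. fls_scale u w = v}" for v
  have "roots_of_unity n = (\<Union>v\<in>fls_orbit n w. fiber v)"
    by (auto simp: fiber_def fls_orbit_def)
  moreover have "card (\<Union>v\<in>fls_orbit n w. fiber v) = (\<Sum>v\<in>fls_orbit n w. card (fiber v))"
    using finite_roots_of_unity[OF n] finite_fls_orbit[OF n]
    by (intro card_UN_disjoint) (auto simp: fiber_def)
  ultimately have "card (roots_of_unity n :: 'k set) = (\<Sum>v\<in>fls_orbit n w. card (fiber v))"
    by simp
  also have "\<dots> = (\<Sum>v\<in>fls_orbit n w. card (fls_stabilizer n w))"
    using card_fiber_eq_card_fls_stabilizer[OF n] by (intro sum.cong) (simp_all add: fiber_def)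
  finally show ?thesis by simp
qed

lemma fls_stabilizer_eq_roots_of_unity:
  fixes w :: "'k::{alg_closed_field, field_char_0} fls"
  assumes n: "n > 0"
  shows "fls_stabilizer n w = roots_of_unity (card (fls_stabilizer n w))"
proof -
  define S where "S = fls_stabilizer n w"
  have nz: "s \<noteq> 0" if "s \<in> S" for s
    using that roots_of_unity_nonzero[OF n] by (auto simp: S_def fls_stabilizer_def)
  have fin: "finite S"
    using finite_roots_of_unity[OF n] unfolding S_def fls_stabilizer_def by (rule rev_finite_subset) auto
  have "card S > 0"
    using fin by (auto simp: card_gt_0_iff S_def fls_stabilizer_def intro!: exI[of _ 1])
  have "S \<subseteq> roots_of_unity (card S)"
  proof
    fix x assume "x \<in> S"
    have "x ^ card S = 1"
    proof (rule finite_mult_subgroup_power_card[OF fin _ _ _ \<open>x \<in> S\<close>])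
      show "0 \<notin> S" using nz by blast
      show "x * y \<in> S" if "x \<in> S" "y \<in> S" for x y
        using that nz by (auto simp: S_def fls_stabilizer_def roots_of_unity_mult simp flip: fls_scale_scale)
      show "inverse x \<in> S" if "x \<in> S" for x
        using that nz[OF that] fls_scale_scale[of "inverse x" x w]
        by (auto simp: S_def fls_stabilizer_def roots_of_unity_inverse)
    qed
    then show "x \<in> roots_of_unity (card S)" by (simp add: roots_of_unity_def)
  qed
  then show ?thesis
    using card_subset_eq[OF finite_roots_of_unity[OF \<open>card S > 0\<close>, where 'k='k]]
      card_roots_of_unity[OF \<open>card S > 0\<close>, where 'k='k]
    by (simp add: S_def)
qed

text \<open>A root at any level \<open>n\<close> yields one at level \<open>deg P\<close>: the stabilizer of the root is the group
  of \<open>t\<close>-th roots of unity with \<open>n = t \<cdot> deg P\<close>, so the root is a series in \<open>X\<^sup>t\<close>.\<close>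

lemma subsX_degree_has_root:
  fixes P :: "'k::{alg_closed_field, field_char_0} R"
  assumes P: "P \<in> Rnat" and n: "n > 0" and w: "poly (subsX n P) w = 0"
  shows "\<exists>w'. poly (subsX (degree P) P) w' = 0"
proof -
  define t where "t = card (fls_stabilizer n w)"
  have n_eq: "n = degree P * t"
    using card_roots_of_unity_orbit_stabilizer[OF n, of w] card_roots_of_unity[OF n, where 'k='k]
      card_fls_orbit[OF P n w] by (simp add: t_def)
  then have "t > 0" "degree P > 0" using n by simp_all
  have "fls_compose_power (fls_decimate t w) t = w"
  proof (rule fls_compose_power_decimate[OF \<open>t > 0\<close>])
    show "fls_scale u w = w" if "u \<in> roots_of_unity t" for u
      using that fls_stabilizer_eq_roots_of_unity[OF n, of w] by (auto simp: t_def fls_stabilizer_def)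
  qed
  then have "poly (subsX n P) w = fls_compose_power (poly (subsX (degree P) P) (fls_decimate t w)) t"
    using n_eq \<open>t > 0\<close> \<open>degree P > 0\<close> by (metis poly_subsX subsX_subsX)
  then show ?thesis using w \<open>t > 0\<close> by auto
qed

theorem subsX_degree_splits:
  fixes P :: "'k::{alg_closed_field, field_char_0} R"
  assumes P: "P \<in> Rnat"
  shows "\<exists>w. subsX (degree P) P = (\<Prod>u\<in>roots_of_unity (degree P). [:- fls_scale u w, 1:]) \<and>
    inj_on (\<lambda>u. fls_scale u w) (roots_of_unity (degree P))"
proof -
  have d: "lead_coeff P = 1" "degree P > 0" using P by (auto simp: Rnat_def)
  obtain n z where "n > 0" "poly (subsX n P) z = 0"
    using puiseux_root[of P] d by auto
  then obtain w where w: "poly (subsX (degree P) P) w = 0"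
    using subsX_degree_has_root[OF P] by blast
  have inj: "inj_on (\<lambda>u. fls_scale u w) (roots_of_unity (degree P))"
    using card_fls_orbit[OF P d(2) w] finite_roots_of_unity[OF d(2)] card_roots_of_unity[OF d(2), where 'k='k]
    by (intro eq_card_imp_inj_on) (simp_all add: fls_orbit_def)
  have "subsX (degree P) P = (\<Prod>v\<in>fls_orbit (degree P) w. [:-v, 1:])"
    using subsX_eq_orbit_prod[OF P d(2) w] .
  also have "\<dots> = (\<Prod>u\<in>roots_of_unity (degree P). [:- fls_scale u w, 1:])"
    unfolding fls_orbit_def using inj by (simp add: prod.reindex)
  finally show ?thesis using inj by blast
qed

section \<open>Intersection multiplicity along a branch\<close>

text \<open>Over \<open>X = t\<^sup>d\<close>, \<open>d = deg P\<close>, the roots of \<open>P\<close> are the conjugates \<open>w(u t)\<close>, \<open>u\<^sup>d = 1\<close>, of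
  one Puiseux series \<open>w = branch P\<close>.\<close>

definition branch :: "'k::{alg_closed_field, field_char_0} R \<Rightarrow> 'k fls" where
  "branch P = (SOME w. subsX (degree P) P = (\<Prod>u\<in>roots_of_unity (degree P). [:- fls_scale u w, 1:]) \<and>
     inj_on (\<lambda>u. fls_scale u w) (roots_of_unity (degree P)))"

lemma subsX_degree_eq_prod_branch:
  assumes "P \<in> Rnat"
  shows "subsX (degree P) P = (\<Prod>u\<in>roots_of_unity (degree P). [:- fls_scale u (branch P), 1:])"
    and "inj_on (\<lambda>u. fls_scale u (branch P)) (roots_of_unity (degree P))"
  using someI_ex[OF subsX_degree_splits[OF assms]] unfolding branch_def by blast+

lemma poly_subsX_branch:
  assumes "P \<in> Rnat"
  shows "poly (subsX (degree P) P) (branch P) = 0"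
proof -
  have "degree P > 0" using assms by (simp add: Rnat_def)
  then show ?thesis
    unfolding subsX_degree_eq_prod_branch[OF assms] poly_prod
    by (intro prod_zero finite_roots_of_unity bexI[of _ 1]) simp_all
qed

definition branch_value :: "'k::{alg_closed_field, field_char_0} R \<Rightarrow> 'k R \<Rightarrow> 'k fls" where
  "branch_value P H = poly (subsX (degree P) H) (branch P)"

lemma branch_value_diff_kconst:
  assumes "P \<in> Rnat"
  shows "branch_value P (H - kconst c) = branch_value P H - fls_const c"
  using assms by (simp add: branch_value_def Rnat_def kconst_def)

lemma sum_mset_sum_singletons:
  "finite A \<Longrightarrow> (\<Sum>z\<in>#(\<Sum>u\<in>A. {#g u#}). f z) = (\<Sum>u\<in>A. f (g u))"
  by (induction A rule: finite_induct) auto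

lemma ordX_neq_MInf [simp]: "ordX f \<noteq> -\<infinity>" "-\<infinity> \<noteq> ordX f"
  by (simp_all add: ordX_def)

lemma sum_constant_ereal:
  assumes "finite A" "c \<noteq> -\<infinity>"
  shows "(\<Sum>x\<in>A. c) = ereal (real (card A)) * (c :: ereal)"
proof (cases c)
  case PInf
  then show ?thesis using assms by (cases "A = {}") (auto simp: sum_Pinfty)
qed (use assms in simp_all)

lemma sum_proots_subsX_Rnat:
  fixes P H :: "'k::{alg_closed_field, field_char_0} R"
  assumes P: "P \<in> Rnat" and \<nu>: "\<nu> > 0" "degree P dvd \<nu>"
  shows "(\<Sum>z\<in>#proots (subsX \<nu> P). ordX (poly (subsX \<nu> H) z)) =
    ereal (real \<nu>) * ordX (branch_value P H)"
proof -
  define d where "d = degree P"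
  define w where "w = branch P"
  have d0: "d > 0" using P by (simp add: Rnat_def d_def)
  obtain m where m: "\<nu> = d * m" using \<nu>(2) by (auto simp: d_def)
  have m0: "m > 0" using m \<nu>(1) by simp
  have "subsX \<nu> P = subsX m (subsX d P)"
    using m d0 m0 by (simp add: subsX_subsX)
  also have "\<dots> = (\<Prod>u\<in>roots_of_unity d. [:- fls_compose_power (fls_scale u w) m, 1:])"
    using m0 by (simp add: subsX_degree_eq_prod_branch[OF P] subsX_prod d_def w_def)
  finally have "proots (subsX \<nu> P) = (\<Sum>u\<in>roots_of_unity d. {#fls_compose_power (fls_scale u w) m#})"
    by (simp add: proots_prod)
  moreover have "ordX (poly (subsX \<nu> H) (fls_compose_power (fls_scale u w) m)) =
      ereal (real m) * ordX (branch_value P H)" if u: "u \<in> roots_of_unity d" for u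
  proof -
    have "poly (subsX \<nu> H) (fls_compose_power (fls_scale u w) m) =
        fls_compose_power (fls_scale u (poly (subsX d H) w)) m"
      using m d0 m0 u by (simp add: poly_subsX fls_scale_poly_subsX flip: subsX_subsX)
    then show ?thesis
      using m0 roots_of_unity_nonzero[OF d0 u]
      by (simp add: ordX_compose_power ordX_scale branch_value_def d_def w_def)
  qed
  ultimately have "(\<Sum>z\<in>#proots (subsX \<nu> P). ordX (poly (subsX \<nu> H) z)) =
      (\<Sum>u\<in>(roots_of_unity d :: 'k set). ereal (real m) * ordX (branch_value P H))"
    by (simp add: sum_mset_sum_singletons finite_roots_of_unity[OF d0])
  also have "\<dots> = ereal (real d) * (ereal (real m) * ordX (branch_value P H))"
    using card_roots_of_unity[OF d0, where 'k='k] finite_roots_of_unity[OF d0, where 'k='k] m0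
    by (simp add: sum_constant_ereal)
  finally show ?thesis
    by (simp add: m mult.assoc[symmetric])
qed

lemma nuF_spec:
  assumes "F \<noteq> 0"
  shows "nuF F > 0" and "P \<in> Rnat \<Longrightarrow> P dvd F \<Longrightarrow> degree P dvd nuF F"
proof -
  have "\<exists>\<nu>. \<nu> > 0 \<and> (\<forall>P\<in>Rnat. P dvd F \<longrightarrow> degree P dvd \<nu>)"
  proof (intro exI conjI ballI impI)
    fix P :: "'a R" assume P: "P \<in> Rnat" "P dvd F"
    then have "1 \<le> degree P" "degree P \<le> degree F"
      using dvd_imp_degree_le[OF P(2) assms] by (simp_all add: Rnat_def)
    then show "degree P dvd fact (degree F)" by (intro dvd_fact)
  qed simp
  then have "nuF F > 0 \<and> (\<forall>P\<in>Rnat. P dvd F \<longrightarrow> degree P dvd nuF F)"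
    unfolding nuF_def by (rule someI_ex)
  then show "nuF F > 0" and "P \<in> Rnat \<Longrightarrow> P dvd F \<Longrightarrow> degree P dvd nuF F" by auto
qed

lemma intm_Rnat:
  fixes P H :: "'k::{alg_closed_field, field_char_0} R"
  assumes P: "P \<in> Rnat"
  shows "intm P H = ordX (branch_value P H)"
proof -
  have "P \<noteq> 0" "degree P > 0" "lead_coeff P = 1" using P by (auto simp: Rnat_def)
  show ?thesis
  proof (cases "H = 0")
    case False
    define \<nu> where "\<nu> = nuF P"
    have \<nu>: "\<nu> > 0" "degree P dvd \<nu>"
      using nuF_spec[OF \<open>P \<noteq> 0\<close>] P by (auto simp: \<nu>_def)
    have "intm P H = ereal (1 / real \<nu>) * (\<Sum>z\<in>#proots (subsX \<nu> P). ordX (poly (subsX \<nu> H) z))"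
      using \<open>P \<noteq> 0\<close> False \<open>lead_coeff P = 1\<close> by (simp add: intm_def \<nu>_def Let_def ordX_def zero_ereal_def)
    also have "\<dots> = ordX (branch_value P H)"
      using \<nu> by (cases "ordX (branch_value P H)") (simp_all add: sum_proots_subsX_Rnat[OF P])
    finally show ?thesis .
  qed (use \<open>P \<noteq> 0\<close> \<open>degree P > 0\<close> in \<open>simp add: intm_def branch_value_def ordX_def\<close>)
qed

lemma sum_mset_ereal_eq_PInf_iff:
  fixes M :: "ereal multiset"
  assumes "-\<infinity> \<notin># M"
  shows "sum_mset M = \<infinity> \<longleftrightarrow> \<infinity> \<in># M"
  using assms
proof (induction M)
  case (add x M)
  moreover have "sum_mset M \<noteq> -\<infinity>"
    using add.prems by (induction M) auto
  ultimately show ?case by (cases x; cases "sum_mset M") auto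
qed simp

lemma sum_mset_image_sum_mset:
  "(\<Sum>z\<in>#(\<Sum>P\<in>#Fs. M P). f z) = (\<Sum>P\<in>#Fs. \<Sum>z\<in>#M P. f z)"
  by (induction Fs) auto

lemma sum_mset_ereal_mult_left:
  assumes "c \<ge> 0"
  shows "(\<Sum>x\<in>#M. ereal c * f x) = ereal c * (\<Sum>x\<in>#M. f x)"
proof (induction M)
  case (add x M)
  then show ?case
    using distrib_left_ereal_nn[OF assms, of "f x"] by (simp add: mult.commute)
qed simp

locale kmonic_factorization =
  fixes F :: "'k::{alg_closed_field, field_char_0} R" and Fs :: "'k R multiset"
  assumes kmonic: "kmonic F" and factors_Rnat: "\<forall>P\<in>#Fs. P \<in> Rnat"
    and factorization: "F = smult (lead_coeff F) (prod_mset Fs)"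
begin

lemma nonzero: "F \<noteq> 0"
  using kmonic by (simp add: kmonic_def)

lemma lead_coeff_eq_const: obtains c where "lead_coeff F = fls_const c" "c \<noteq> 0"
proof -
  obtain c where c: "lead_coeff F = fls_const c"
    using kmonic by (auto simp: kmonic_def)
  moreover have "c \<noteq> 0"
    using c nonzero by auto
  ultimately show ?thesis using that by blast
qed

lemma factor_dvd: "P \<in># Fs \<Longrightarrow> P dvd F"
  by (subst factorization) (simp add: dvd_smult dvd_prod_mset)

lemma degree_eq_sum_factors: "degree F = (\<Sum>P\<in>#Fs. degree P)"
proof -
  have "lead_coeff F \<noteq> 0" "0 \<notin># Fs"
    using nonzero factors_Rnat by (auto simp: Rnat_def)
  then show ?thesis
    using arg_cong[OF factorization, of degree]
    by (induction Fs arbitrary: F) (auto simp: degree_mult_eq prod_mset_zero_iff)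
qed

lemma intm_0_eq_sum_factors: "intm F 0 = (\<Sum>P\<in>#Fs. intm P 0)"
proof (cases "Fs = {#}")
  case False
  then obtain P where P: "P \<in># Fs" by blast
  have "degree F \<noteq> 0"
    using P factors_Rnat dvd_imp_degree_le[OF factor_dvd[OF P] nonzero] by (fastforce simp: Rnat_def)
  then have "intm F 0 = \<infinity>"
    using nonzero by (simp add: intm_def)
  moreover have "-\<infinity> \<notin># image_mset (\<lambda>Q. intm Q 0) Fs"
    using factors_Rnat by (auto simp: intm_Rnat)
  moreover have "intm P 0 = \<infinity>"
    using P factors_Rnat by (auto simp: intm_def Rnat_def)
  ultimately have "(\<Sum>Q\<in>#Fs. intm Q 0) = \<infinity>"
    using P by (force simp: sum_mset_ereal_eq_PInf_iff)
  with \<open>intm F 0 = \<infinity>\<close> show ?thesis by simp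
qed (simp add: intm_def nonzero degree_eq_sum_factors)

lemma proots_subsX_eq_sum_factors:
  assumes "\<nu> > 0"
  shows "proots (subsX \<nu> F) = (\<Sum>P\<in>#Fs. proots (subsX \<nu> P))"
proof -
  obtain c where "lead_coeff F = fls_const c" "c \<noteq> 0"
    by (rule lead_coeff_eq_const)
  then have "proots (subsX \<nu> F) = proots (\<Prod>P\<in>#Fs. subsX \<nu> P)"
    using assms nonzero by (subst factorization) (simp add: subsX_prod_mset)
  moreover have "0 \<notin># image_mset (subsX \<nu>) Fs"
    using factors_Rnat assms by (auto simp: Rnat_def)
  note proots_prod_mset[OF this]
  ultimately show ?thesis
    by (simp add: multiset.map_comp o_def)
qed

lemma intm_eq_sum_factors: "intm F H = (\<Sum>P\<in>#Fs. intm P H)"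
proof (cases "H = 0")
  case False
  define \<nu> where "\<nu> = nuF F"
  have \<nu>: "\<nu> > 0" using nuF_spec(1)[OF nonzero] by (simp add: \<nu>_def)
  have "(\<Sum>z\<in>#proots (subsX \<nu> F). ordX (poly (subsX \<nu> H) z)) =
      (\<Sum>P\<in>#Fs. \<Sum>z\<in>#proots (subsX \<nu> P). ordX (poly (subsX \<nu> H) z))"
    by (simp add: proots_subsX_eq_sum_factors[OF \<nu>] sum_mset_image_sum_mset)
  also have "\<dots> = (\<Sum>P\<in>#Fs. ereal (real \<nu>) * intm P H)"
    using factors_Rnat \<nu> nuF_spec(2)[OF nonzero] factor_dvd
    by (intro arg_cong[where f = sum_mset] image_mset_cong) (simp add: sum_proots_subsX_Rnat intm_Rnat \<nu>_def)
  also have "\<dots> = ereal (real \<nu>) * (\<Sum>P\<in>#Fs. intm P H)"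
    by (simp add: sum_mset_ereal_mult_left)
  finally have "intm F H = ereal (1 / real \<nu>) * (ereal (real \<nu>) * (\<Sum>P\<in>#Fs. intm P H))"
    using nonzero False kmonic by (auto simp: intm_def \<nu>_def Let_def ordX_def zero_ereal_def kmonic_def)
  then show ?thesis
    using \<nu> by (cases "\<Sum>P\<in>#Fs. intm P H") simp_all
qed (simp add: intm_0_eq_sum_factors)

lemma intm_factor_finite:
  assumes "intm F H \<noteq> \<infinity>" "P \<in># Fs"
  shows "intm P H \<noteq> \<infinity>"
proof -
  have "-\<infinity> \<notin># image_mset (\<lambda>Q. intm Q H) Fs"
    using factors_Rnat by (auto simp: intm_Rnat)
  then show ?thesis
    using assms by (force simp: intm_eq_sum_factors sum_mset_ereal_eq_PInf_iff)
qed

end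

section \<open>The derivative identity\<close>

lemma fls_deriv_poly:
  fixes p :: "'k::field_char_0 fls poly"
  shows "fls_deriv (poly p z) = poly (map_poly fls_deriv p) z + poly (pderiv p) z * fls_deriv z"
proof (induction p)
  case (pCons a p)
  have "map_poly fls_deriv (pCons a p) = pCons (fls_deriv a) (map_poly fls_deriv p)"
    by (rule map_poly_pCons) simp
  then show ?case
    using pCons.IH by (simp add: pderiv_pCons algebra_simps)
qed simp

lemma fls_const_X_intpow_mult:
  fixes f :: "'a::comm_ring_1 fls"
  shows "fls_const c * fls_X_intpow k * f = fls_const c * fls_shift (- k) f"
  by (simp only: mult.assoc fls_X_intpow_times_conv_shift(1))

lemma fls_const_X_intpow_mult_nth:
  fixes f :: "'a::comm_ring_1 fls"
  shows "(fls_const c * fls_X_intpow k * f) $$ n = c * f $$ (n - k)"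
  by (simp add: fls_const_X_intpow_mult)

lemma fls_subdegree_const_X_intpow_mult:
  fixes f :: "'a::field fls"
  assumes "c \<noteq> 0" "f \<noteq> 0"
  shows "fls_subdegree (fls_const c * fls_X_intpow k * f) = k + fls_subdegree f"
  using assms by (simp add: fls_const_X_intpow_mult fls_subdegree_mult fls_const_nonzero fls_shift_eq0_iff)

lemma fls_deriv_compose_power:
  fixes a :: "'k::field_char_0 fls"
  assumes d: "d > 0"
  shows "fls_deriv (fls_compose_power a d) =
    fls_const (of_nat d) * fls_X_intpow (int d - 1) * fls_compose_power (fls_deriv a) d"
proof (intro fls_eqI)
  fix n :: int
  show "fls_deriv (fls_compose_power a d) $$ n =
      (fls_const (of_nat d) * fls_X_intpow (int d - 1) * fls_compose_power (fls_deriv a) d) $$ n"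
  proof (cases "int d dvd n + 1")
    case True
    then obtain k where k: "n + 1 = int d * k" by blast
    then have k': "n - (int d - 1) = int d * (k - 1)" by (simp add: algebra_simps)
    have "fls_deriv (fls_compose_power a d) $$ n = of_int (n + 1) * a $$ k"
      using d k by (simp add: fls_nth_compose_power)
    also have "\<dots> = of_nat d * (of_int k * a $$ k)"
      by (simp add: k)
    also have "\<dots> = of_nat d * fls_compose_power (fls_deriv a) d $$ (n - (int d - 1))"
      using d by (simp add: k' fls_compose_power_nth_mult)
    finally show ?thesis
      unfolding fls_const_X_intpow_mult_nth .
  next
    case False
    have "\<not> int d dvd n - (int d - 1)"
      using False dvd_add_right_iff[of "int d" "int d" "n - (int d - 1)"] by simp
    then show ?thesis
      unfolding fls_const_X_intpow_mult_nth using False d by (simp add: fls_nth_compose_power)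
  qed
qed

text \<open>The chain rule along the branch: \<open>G\<^sub>Y\<close> vanishes there because \<open>P\<close> divides \<open>G\<^sub>Y\<close>.\<close>

lemma fls_deriv_branch_value:
  fixes P G :: "'k::{alg_closed_field, field_char_0} R"
  assumes P: "P \<in> Rnat" and dvd: "P dvd pderiv G"
  shows "fls_deriv (branch_value P G) =
    fls_const (of_nat (degree P)) * fls_X_intpow (int (degree P) - 1) * branch_value P (derX G)"
proof -
  define d where "d = degree P"
  have d: "d > 0" using P by (simp add: Rnat_def d_def)
  have "map_poly fls_deriv (subsX d G) =
      smult (fls_const (of_nat d) * fls_X_intpow (int d - 1)) (subsX d (derX G))"
    using d by (intro poly_eqI) (simp add: coeff_map_poly coeff_subsX derX_def fls_deriv_compose_power)
  moreover have "poly (pderiv (subsX d G)) (branch P) = 0"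
  proof -
    obtain Q where "pderiv G = P * Q" using dvd by (elim dvdE)
    then show ?thesis
      using d poly_subsX_branch[OF P] by (simp add: pderiv_subsX d_def)
  qed
  ultimately show ?thesis
    by (simp add: branch_value_def fls_deriv_poly d_def mult.assoc)
qed

text \<open>The one-variable heart of the identity: \<open>ord g' = ord g - 1\<close>, except when \<open>ord g = 0\<close>,
  where \<open>ord g' = ord (g - g(0)) - 1\<close>.\<close>

lemma fls_subdegree_from_deriv:
  fixes g gx :: "'k::field_char_0 fls"
  assumes d: "d > 0"
    and deriv: "fls_deriv g = fls_const (of_nat d) * fls_X_intpow (int d - 1) * gx"
    and nonconst: "\<And>c. g \<noteq> fls_const c"
  shows "gx \<noteq> 0"
    and "fls_subdegree gx = fls_subdegree g - int d +
      (if fls_subdegree g = 0 then fls_subdegree (g - fls_const (g $$ 0)) else 0)"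
proof -
  define f where "f = (if fls_subdegree g = 0 then g - fls_const (g $$ 0) else g)"
  have "fls_deriv f = fls_deriv g" by (simp add: f_def)
  have "f \<noteq> fls_const c" for c
  proof
    assume "f = fls_const c"
    then have "g = fls_const c \<or> g = fls_const c + fls_const (g $$ 0)"
      by (auto simp: f_def diff_eq_eq split: if_splits)
    then show False
      using nonconst by (metis fls_plus_const)
  qed
  then have "f \<noteq> 0" "fls_deriv f \<noteq> 0"
    using fls_deriv_eq_0_iff[of f] by (metis fls_const_0, blast)
  have "fls_subdegree f \<noteq> 0"
  proof (cases "fls_subdegree g = 0")
    case True
    then show ?thesis using nth_fls_subdegree_nonzero[OF \<open>f \<noteq> 0\<close>] by (auto simp: f_def)
  qed (simp add: f_def)
  show "gx \<noteq> 0"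
    using \<open>fls_deriv f \<noteq> 0\<close> deriv \<open>fls_deriv f = fls_deriv g\<close> by auto
  have "fls_subdegree (fls_deriv f) = fls_subdegree f - 1"
    using \<open>fls_subdegree f \<noteq> 0\<close> by (rule fls_subdegree_deriv)
  moreover have "fls_subdegree (fls_deriv f) = int d - 1 + fls_subdegree gx"
    unfolding \<open>fls_deriv f = fls_deriv g\<close> deriv using d \<open>gx \<noteq> 0\<close>
    by (subst fls_subdegree_const_X_intpow_mult) simp_all
  moreover have "fls_subdegree f = fls_subdegree g +
      (if fls_subdegree g = 0 then fls_subdegree (g - fls_const (g $$ 0)) else 0)"
    by (simp add: f_def)
  ultimately show "fls_subdegree gx = fls_subdegree g - int d +
      (if fls_subdegree g = 0 then fls_subdegree (g - fls_const (g $$ 0)) else 0)"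
    by linarith
qed

lemma ordX_diff_const_pos_iff:
  fixes g :: "'k::field fls"
  assumes g: "g \<noteq> 0" "fls_subdegree g \<ge> 0"
  shows "ordX (g - fls_const c) > 0 \<longleftrightarrow> c = g $$ 0"
proof
  assume pos: "ordX (g - fls_const c) > 0"
  have "(g - fls_const c) $$ 0 = 0"
  proof (cases "g - fls_const c = 0")
    case False
    then have "0 < fls_subdegree (g - fls_const c)"
      using pos by (simp add: ordX_def)
    then show ?thesis by (rule fls_eq0_below_subdegree)
  qed simp
  then show "c = g $$ 0" by simp
next
  assume c: "c = g $$ 0"
  show "ordX (g - fls_const c) > 0"
  proof (cases "g - fls_const c = 0")
    case False
    have "fls_subdegree (g - fls_const c) \<ge> 0"
      using g False by (intro fls_subdegree_geI) auto
    moreover have "fls_subdegree (g - fls_const c) \<noteq> 0"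
      using nth_fls_subdegree_nonzero[OF False] c by auto
    ultimately show ?thesis using False by (simp add: ordX_def)
  qed (simp add: ordX_def)
qed

lemma res_Rnat:
  fixes P G :: "'k::{alg_closed_field, field_char_0} R"
  assumes P: "P \<in> Rnat" and g: "branch_value P G \<noteq> 0"
  shows "res P G =
    (if fls_subdegree (branch_value P G) \<ge> 0 then Some (branch_value P G $$ 0) else None)"
proof (cases "fls_subdegree (branch_value P G) \<ge> 0")
  case True
  have "(THE c. intm P (G - kconst c) > 0) = branch_value P G $$ 0"
    using ordX_diff_const_pos_iff[OF g True]
    by (simp add: intm_Rnat[OF P] branch_value_diff_kconst[OF P])
  then show ?thesis
    using True g by (simp add: res_def intm_Rnat[OF P] ordX_def)
qed (use g in \<open>simp add: res_def intm_Rnat[OF P] ordX_def\<close>)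

definition beta_factor :: "('k::field) R \<Rightarrow> 'k R \<Rightarrow> ereal" where
  "beta_factor P G = (case res P G of Some c \<Rightarrow> if c \<noteq> 0 then intm P (G - kconst c) else 0 | None \<Rightarrow> 0)"

lemma sum_mset_filter_mset_if:
  "(\<Sum>x\<in>#filter_mset p M. f x) = (\<Sum>x\<in>#M. if p x then f x else (0::'a::comm_monoid_add))"
  by (induction M) auto

lemma betaF_eq_sum_beta_factor: "betaF Fs G = (\<Sum>P\<in>#Fs. beta_factor P G)"
proof -
  define C where "C = alphaSet Fs G - {0}"
  have "alphaSet Fs G \<subseteq> (\<lambda>P. the (res P G)) ` set_mset Fs"
    by (auto simp: alphaSet_def alphaL_def image_iff) (metis option.sel)
  then have "finite C" unfolding C_def by (meson finite_Diff finite_imageI finite_set_mset finite_subset)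
  have beta: "(\<Sum>c\<in>C. if res P G = Some c then intm P (G - kconst c) else 0) = beta_factor P G"
    if "P \<in># Fs" for P
  proof (cases "res P G")
    case (Some c0)
    have "c0 \<in> C \<longleftrightarrow> c0 \<noteq> 0"
      using that Some by (auto simp: C_def alphaSet_def alphaL_def)
    then show ?thesis
      using Some \<open>finite C\<close> by (simp add: beta_factor_def sum.delta')
  qed (simp add: beta_factor_def)
  have "betaF Fs G = (\<Sum>c\<in>C. \<Sum>P\<in>#Fs. if res P G = Some c then intm P (G - kconst c) else 0)"
    unfolding betaF_def betaL_def alphaL_def C_def by (simp add: sum_mset_filter_mset_if)
  also have "\<dots> = (\<Sum>P\<in>#Fs. \<Sum>c\<in>C. if res P G = Some c then intm P (G - kconst c) else 0)"
    by (induction Fs) (simp_all add: sum.distrib)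
  also have "\<dots> = (\<Sum>P\<in>#Fs. beta_factor P G)"
    using beta by (intro arg_cong[where f = sum_mset] image_mset_cong) simp
  finally show ?thesis .
qed

lemma intm_derX_Rnat:
  fixes P G :: "'k::{alg_closed_field, field_char_0} R"
  assumes P: "P \<in> Rnat" and dvd: "P dvd pderiv G" and coprime: "\<And>c. intm P (G - kconst c) \<noteq> \<infinity>"
  shows "\<exists>a b c :: int. intm P (derX G) = ereal (of_int a) \<and> intm P G = ereal (of_int b) \<and>
    beta_factor P G = ereal (of_int c) \<and> a = b - int (degree P) + c"
proof -
  define g where "g = branch_value P G"
  define \<beta> where "\<beta> = (if fls_subdegree g = 0 then fls_subdegree (g - fls_const (g $$ 0)) else 0)"
  have g_minus: "g - fls_const c \<noteq> 0" for c
    using coprime[of c] by (auto simp: intm_Rnat[OF P] branch_value_diff_kconst[OF P] g_def ordX_def)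
  then have "g \<noteq> 0" using g_minus[of 0] by simp
  have "degree P > 0" using P by (simp add: Rnat_def)
  from fls_subdegree_from_deriv[OF this fls_deriv_branch_value[OF P dvd, folded g_def]] g_minus
  have gx: "branch_value P (derX G) \<noteq> 0"
    "fls_subdegree (branch_value P (derX G)) = fls_subdegree g - int (degree P) + \<beta>"
    by (auto simp: \<beta>_def)
  have "beta_factor P G = ereal (of_int \<beta>)"
  proof (cases "fls_subdegree g = 0")
    case True
    then have "g $$ 0 \<noteq> 0" using nth_fls_subdegree_nonzero[OF \<open>g \<noteq> 0\<close>] by simp
    then show ?thesis
      using True g_minus[of "g $$ 0"] res_Rnat[OF P] \<open>g \<noteq> 0\<close>
      by (simp add: beta_factor_def \<beta>_def g_def intm_Rnat[OF P] branch_value_diff_kconst[OF P] ordX_def)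
  next
    case False
    then have "res P G = None \<or> res P G = Some 0"
      using res_Rnat[OF P] \<open>g \<noteq> 0\<close> by (auto simp: g_def)
    then show ?thesis using False by (auto simp: beta_factor_def \<beta>_def)
  qed
  then show ?thesis
    using gx \<open>g \<noteq> 0\<close>
    by (intro exI[of _ "fls_subdegree (branch_value P (derX G))"] exI[of _ "fls_subdegree g"] exI[of _ \<beta>])
      (simp add: intm_Rnat[OF P] ordX_def g_def)
qed

lemma sum_mset_ereal_of_int: "(\<Sum>x\<in>#M. ereal (of_int (f x))) = ereal (of_int (\<Sum>x\<in>#M. f x))"
  by (induction M) auto

theorem mainTheorem2:
  fixes F G :: "'k::{alg_closed_field, field_char_0} fls poly"
    and Fs :: "'k fls poly multiset"
  assumes "kmonic F"
    and "\<forall>P\<in>#Fs. P \<in> Rnat"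
    and "F = smult (lead_coeff F) (prod_mset Fs)"
    and "\<forall>c::'k. intm F (G - kconst c) \<noteq> \<infinity>"
    and "\<forall>P\<in>#Fs. P dvd pderiv G"
  shows "\<exists>a b c :: int. intm F (derX G) = ereal (of_int a) \<and> intm F G = ereal (of_int b)
           \<and> betaF Fs G = ereal (of_int c) \<and> a = b - int (degree F) + c"
proof -
  interpret kmonic_factorization F Fs
    using assms(1-3) by unfold_locales
  obtain a b c :: "_ \<Rightarrow> int" where abc: "\<And>P. P \<in># Fs \<Longrightarrow>
      intm P (derX G) = ereal (of_int (a P)) \<and> intm P G = ereal (of_int (b P)) \<and>
      beta_factor P G = ereal (of_int (c P)) \<and> a P = b P - int (degree P) + c P"
    using intm_derX_Rnat factors_Rnat assms(4,5) intm_factor_finite by metis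
  have "(\<Sum>P\<in>#Fs. a P) = (\<Sum>P\<in>#Fs. b P - int (degree P) + c P)"
    using abc by (intro arg_cong[where f = sum_mset] image_mset_cong) blast
  also have "\<dots> = (\<Sum>P\<in>#Fs. b P) - int (degree F) + (\<Sum>P\<in>#Fs. c P)"
    unfolding degree_eq_sum_factors by (induction Fs) simp_all
  finally have "(\<Sum>P\<in>#Fs. a P) = (\<Sum>P\<in>#Fs. b P) - int (degree F) + (\<Sum>P\<in>#Fs. c P)" .
  moreover have "intm F (derX G) = ereal (of_int (\<Sum>P\<in>#Fs. a P))" "intm F G = ereal (of_int (\<Sum>P\<in>#Fs. b P))"
    "betaF Fs G = ereal (of_int (\<Sum>P\<in>#Fs. c P))"
    using abc by (simp_all add: intm_eq_sum_factors betaF_eq_sum_beta_factor flip: sum_mset_ereal_of_int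
      cong: image_mset_cong)
  ultimately show ?thesis by blast
qed

end
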